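(* For all well-typed terms $\Gamma\vdash t:A$ and $\Gamma\vdash u:A$ of $\lambda^{S}$: $\Gamma\vdash t\equiv u:A$ holds in $\lambda^{S}$ if and only if $[\![t]\!]=[\![u]\!]:[\![\Gamma]\!]\to[\![A]\!]$ in every categorical model of $\lambda^{S}$ (i.e. every cartesian closed category equipped with a strong endofunctor, for every choice of interpretation of the base type).
   Context: Types: $A,B ::= \iota \mid 1 \mid A\times B \mid A\to B \mid \Diamond A$, where $\iota$ is a base type. A context $\Gamma$ is a list $x_1:A_1,\dots,x_n:A_n$ of distinct variables. Terms of the simply typed part: variables, $()$, $\langle t,u\rangle$, $\mathsf{fst}\,t$, $\mathsf{snd}\,t$, $\lambda x.t$, $t\,u$, with the standard typing rules. Modal term formers: (letmap) if $\Gamma\vdash t:\Diamond A$ and $\Gamma,x:A\vdash u:B$ then $\Gamma\vdash \mathsf{letmap}\ x=t\ \mathsf{in}\ u:\Diamond B$; (ret) if $\Gamma\vdash t:A$ then $\Gamma\vdash\mathsf{ret}\,t:\Diamond A$; (let) if $\Gamma\vdash t:\Diamond A$ and $\Gamma,x:A\vdash u:\Diamond B$ then $\Gamma\vdash\mathsf{let}\ x=t\ \mathsf{in}\ u:\Diamond B$. The calculus $\lambda^{S}$ has only letmap; $\lambda^{SR}$ has letmap and ret; $\lambda^{SJ}$ has letmap and let; $\lambda^{ML}$ (Moggi's monadic metalanguage) has ret and let. The equational theory $\Gamma\vdash t\equiv u:A$ of each calculus is the least congruence on well-typed terms (equivalence relation compatible with all term formers) containing the $\beta\eta$-laws of the simply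 typed lambda calculus ($t\equiv()$ for $t:1$; $t\equiv\langle\mathsf{fst}\,t,\mathsf{snd}\,t\rangle$; $\mathsf{fst}\langle t,u\rangle\equiv t$; $\mathsf{snd}\langle t,u\rangle\equiv u$; $t\equiv\lambda x.\,t\,x$ with $x$ fresh; $(\lambda x.t)\,u\equiv t[u/x]$) and the following modal laws, each included in the indicated calculi (terms are implicitly weakened into larger contexts where needed; $t[u/x]$ is capture-avoiding substitution): (letmap-$\eta$) $t\equiv\mathsf{letmap}\ x=t\ \mathsf{in}\ x$ [$\lambda^{S},\lambda^{SR},\lambda^{SJ}$]; (letmap-$\beta$) $\mathsf{letmap}\ y=(\mathsf{letmap}\ x=t\ \mathsf{in}\ u)\ \mathsf{in}\ u'\equiv\mathsf{letmap}\ x=t\ \mathsf{in}\ u'[u/y]$ [$\lambda^{S},\lambda^{SR},\lambda^{SJ}$]; (ret-letmap) $\mathsf{letmap}\ x=\mathsf{ret}\,t\ \mathsf{in}\ u\equiv\mathsf{ret}(u[t/x])$ [$\lambda^{SR}$]; (let-letmap) $\mathsf{let}\ y=(\mathsf{letmap}\ x=t\ \mathsf{in}\ u)\ \mathsf{in}\ u'\equiv\mathsf{let}\ x=t\ \mathsf{in}\ u'[u/y]$ [$\lambda^{SJ}$]; (com) $\mathsf{letmap}\ y=(\mathsf{let}\ x=t\ \mathsf{in}\ u)\ \mathsf{in}\ u'\equiv\mathsf{let}\ x=t\ \mathsf{in}\ (\mathsf{letmap}\ y=u\ \mathsf{in}\ u')$ [$\lambda^{SJ}$]; (ass) $\mathsf{let}\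 y=(\mathsf{let}\ x=t\ \mathsf{in}\ u)\ \mathsf{in}\ u'\equiv\mathsf{let}\ x=t\ \mathsf{in}\ (\mathsf{let}\ y=u\ \mathsf{in}\ u')$ [$\lambda^{SJ},\lambda^{ML}$]; (ML-$\beta$) $\mathsf{let}\ x=\mathsf{ret}\,t\ \mathsf{in}\ u\equiv u[t/x]$ [$\lambda^{ML}$]; (ML-$\eta$) $t\equiv\mathsf{let}\ x=t\ \mathsf{in}\ \mathsf{ret}\,x$ [$\lambda^{ML}$]. Categorical models: a categorical model of $\lambda^{S}$ is a cartesian closed category $\mathcal C$ with an endofunctor $D$ and a strength $\mathrm{st}_{X,Y}:X\times DY\to D(X\times Y)$ natural in $X,Y$ satisfying $D\pi_2\circ\mathrm{st}_{1,X}=\pi_2$ and $D\alpha\circ\mathrm{st}_{X\times Y,Z}=\mathrm{st}_{X,Y\times Z}\circ(\mathrm{id}\times\mathrm{st}_{Y,Z})\circ\alpha$ ($\alpha$ the associator). Given an object interpreting $\iota$, types are interpreted by $[\![1]\!]$ terminal, products, exponentials, $[\![\Diamond A]\!]=D[\![A]\!]$; contexts by iterated products starting from the terminal object; simply typed terms in the standard cartesian closed way, and $[\![\mathsf{letmap}\ x=t\ \mathsf{in}\ u]\!]=D[\![u]\!]\circ\mathrm{st}\circ\langle\mathrm{id},[\![t]\!]\rangle$. *)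

theory Defs
  imports Main
begin

datatype ty = Base | One | Prod ty ty | Arr ty ty | Dia ty

text \<open>Variables are de Bruijn indices; Var 0 is the most recently bound
 variable, i.e. the head of the context list. Letmap t u stands for (letmap x = t in u), the
 variable x being bound in u as index 0.\<close>
datatype tm = Var nat | Unit | Pair tm tm | Fst tm | Snd tm
  | Lam ty tm | App tm tm | Letmap tm tm

text \<open>A context x_1:A_1,...,x_n:A_n is the list [A_n, ..., A_1].\<close>
inductive typing :: "ty list \<Rightarrow> tm \<Rightarrow> ty \<Rightarrow> bool" where
  T_Var: "i < length \<Gamma> \<Longrightarrow> typing \<Gamma> (Var i) (\<Gamma> ! i)"
| T_Unit: "typing \<Gamma> Unit One"
| T_Pair: "typing \<Gamma> t A \<Longrightarrow> typing \<Gamma> u B \<Longrightarrow> typing \<Gamma> (Pair t u) (Prod A B)"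
| T_Fst: "typing \<Gamma> t (Prod A B) \<Longrightarrow> typing \<Gamma> (Fst t) A"
| T_Snd: "typing \<Gamma> t (Prod A B) \<Longrightarrow> typing \<Gamma> (Snd t) B"
| T_Lam: "typing (A # \<Gamma>) t B \<Longrightarrow> typing \<Gamma> (Lam A t) (Arr A B)"
| T_App: "typing \<Gamma> t (Arr A B) \<Longrightarrow> typing \<Gamma> u A \<Longrightarrow> typing \<Gamma> (App t u) B"
| T_Letmap: "typing \<Gamma> t (Dia A) \<Longrightarrow> typing (A # \<Gamma>) u B \<Longrightarrow> typing \<Gamma> (Letmap t u) (Dia B)"

primrec lift :: "tm \<Rightarrow> nat \<Rightarrow> tm" where
  "lift (Var i) k = (if i < k then Var i else Var (Suc i))"
| "lift Unit k = Unit"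
| "lift (Pair t u) k = Pair (lift t k) (lift u k)"
| "lift (Fst t) k = Fst (lift t k)"
| "lift (Snd t) k = Snd (lift t k)"
| "lift (Lam A t) k = Lam A (lift t (Suc k))"
| "lift (App t u) k = App (lift t k) (lift u k)"
| "lift (Letmap t u) k = Letmap (lift t k) (lift u (Suc k))"

primrec subst :: "tm \<Rightarrow> nat \<Rightarrow> tm \<Rightarrow> tm" where
  "subst (Var i) k s = (if i < k then Var i else if i = k then s else Var (i - 1))"
| "subst Unit k s = Unit"
| "subst (Pair t u) k s = Pair (subst t k s) (subst u k s)"
| "subst (Fst t) k s = Fst (subst t k s)"
| "subst (Snd t) k s = Snd (subst t k s)"
| "subst (Lam A t) k s = Lam A (subst t (Suc k) (lift s 0))"
| "subst (App t u) k s = App (subst t k s) (subst u k s)"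
| "subst (Letmap t u) k s = Letmap (subst t k s) (subst u (Suc k) (lift s 0))"

inductive eqv :: "ty list \<Rightarrow> tm \<Rightarrow> tm \<Rightarrow> ty \<Rightarrow> bool" where
  E_refl: "typing \<Gamma> t A \<Longrightarrow> eqv \<Gamma> t t A"
| E_sym: "eqv \<Gamma> t u A \<Longrightarrow> eqv \<Gamma> u t A"
| E_trans: "eqv \<Gamma> t u A \<Longrightarrow> eqv \<Gamma> u v A \<Longrightarrow> eqv \<Gamma> t v A"
| C_Pair: "eqv \<Gamma> t t' A \<Longrightarrow> eqv \<Gamma> u u' B \<Longrightarrow> eqv \<Gamma> (Pair t u) (Pair t' u') (Prod A B)"
| C_Fst: "eqv \<Gamma> t t' (Prod A B) \<Longrightarrow> eqv \<Gamma> (Fst t) (Fst t') A"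
| C_Snd: "eqv \<Gamma> t t' (Prod A B) \<Longrightarrow> eqv \<Gamma> (Snd t) (Snd t') B"
| C_Lam: "eqv (A # \<Gamma>) t t' B \<Longrightarrow> eqv \<Gamma> (Lam A t) (Lam A t') (Arr A B)"
| C_App: "eqv \<Gamma> t t' (Arr A B) \<Longrightarrow> eqv \<Gamma> u u' A \<Longrightarrow> eqv \<Gamma> (App t u) (App t' u') B"
| C_Letmap: "eqv \<Gamma> t t' (Dia A) \<Longrightarrow> eqv (A # \<Gamma>) u u' B
     \<Longrightarrow> eqv \<Gamma> (Letmap t u) (Letmap t' u') (Dia B)"
| unit_eta: "typing \<Gamma> t One \<Longrightarrow> eqv \<Gamma> t Unit One"
| pair_eta: "typing \<Gamma> t (Prod A B) \<Longrightarrow> eqv \<Gamma> t (Pair (Fst t) (Snd t)) (Prod A B)"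
| fst_beta: "typing \<Gamma> t A \<Longrightarrow> typing \<Gamma> u B \<Longrightarrow> eqv \<Gamma> (Fst (Pair t u)) t A"
| snd_beta: "typing \<Gamma> t A \<Longrightarrow> typing \<Gamma> u B \<Longrightarrow> eqv \<Gamma> (Snd (Pair t u)) u B"
| fun_eta: "typing \<Gamma> t (Arr A B) \<Longrightarrow> eqv \<Gamma> t (Lam A (App (lift t 0) (Var 0))) (Arr A B)"
| fun_beta: "typing (A # \<Gamma>) t B \<Longrightarrow> typing \<Gamma> u A \<Longrightarrow> eqv \<Gamma> (App (Lam A t) u) (subst t 0 u) B"
| letmap_eta: "typing \<Gamma> t (Dia A) \<Longrightarrow> eqv \<Gamma> t (Letmap t (Var 0)) (Dia A)"
| letmap_beta: "typing \<Gamma> t (Dia A) \<Longrightarrow> typing (A # \<Gamma>) u B \<Longrightarrow> typing (B # \<Gamma>) u' C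
     \<Longrightarrow> eqv \<Gamma> (Letmap (Letmap t u) u') (Letmap t (subst (lift u' 1) 0 u)) (Dia C)"

record ('o, 'm) sccc =
  Obj :: "'o set"
  Ar :: "'m set"
  dom :: "'m \<Rightarrow> 'o"
  cod :: "'m \<Rightarrow> 'o"
  comp :: "'m \<Rightarrow> 'm \<Rightarrow> 'm"   \<comment> \<open>comp g f = g \<circ> f\<close>
  idm :: "'o \<Rightarrow> 'm"
  trm :: "'o"
  bang :: "'o \<Rightarrow> 'm"
  prd :: "'o \<Rightarrow> 'o \<Rightarrow> 'o"
  pr1 :: "'o \<Rightarrow> 'o \<Rightarrow> 'm"
  pr2 :: "'o \<Rightarrow> 'o \<Rightarrow> 'm"
  tup :: "'m \<Rightarrow> 'm \<Rightarrow> 'm"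
  ex :: "'o \<Rightarrow> 'o \<Rightarrow> 'o"       \<comment> \<open>ex X Y = Y^X\<close>
  ev :: "'o \<Rightarrow> 'o \<Rightarrow> 'm"       \<comment> \<open>ev X Y : Y^X \<times> X \<rightarrow> Y\<close>
  cur :: "'o \<Rightarrow> 'o \<Rightarrow> 'o \<Rightarrow> 'm \<Rightarrow> 'm"  \<comment> \<open>cur Z X Y f : Z \<rightarrow> Y^X for f : Z \<times> X \<rightarrow> Y\<close>
  DO :: "'o \<Rightarrow> 'o"
  DA :: "'m \<Rightarrow> 'm"
  st :: "'o \<Rightarrow> 'o \<Rightarrow> 'm"       \<comment> \<open>st X Y : X \<times> D Y \<rightarrow> D (X \<times> Y)\<close>

definition hom :: "('o, 'm, 'z) sccc_scheme \<Rightarrow> 'o \<Rightarrow> 'o \<Rightarrow> 'm set" where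
  "hom C X Y = {f \<in> Ar C. dom C f = X \<and> cod C f = Y}"

definition prodmap :: "('o, 'm, 'z) sccc_scheme \<Rightarrow> 'm \<Rightarrow> 'm \<Rightarrow> 'm" where
  "prodmap C f g = tup C (comp C f (pr1 C (dom C f) (dom C g))) (comp C g (pr2 C (dom C f) (dom C g)))"

definition assoc :: "('o, 'm, 'z) sccc_scheme \<Rightarrow> 'o \<Rightarrow> 'o \<Rightarrow> 'o \<Rightarrow> 'm" where
  "assoc C X Y Z = tup C (comp C (pr1 C X Y) (pr1 C (prd C X Y) Z))
      (tup C (comp C (pr2 C X Y) (pr1 C (prd C X Y) Z)) (pr2 C (prd C X Y) Z))"

definition is_category :: "('o, 'm, 'z) sccc_scheme \<Rightarrow> bool" where
  "is_category C \<longleftrightarrow>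
     (\<forall>f \<in> Ar C. dom C f \<in> Obj C \<and> cod C f \<in> Obj C)
   \<and> (\<forall>X \<in> Obj C. idm C X \<in> hom C X X)
   \<and> (\<forall>f \<in> Ar C. \<forall>g \<in> Ar C. cod C f = dom C g \<longrightarrow> comp C g f \<in> hom C (dom C f) (cod C g))
   \<and> (\<forall>f \<in> Ar C. comp C (idm C (cod C f)) f = f \<and> comp C f (idm C (dom C f)) = f)
   \<and> (\<forall>f \<in> Ar C. \<forall>g \<in> Ar C. \<forall>h \<in> Ar C. cod C f = dom C g \<longrightarrow> cod C g = dom C h \<longrightarrow>
        comp C h (comp C g f) = comp C (comp C h g) f)"

definition is_terminal :: "('o, 'm, 'z) sccc_scheme \<Rightarrow> bool" where
  "is_terminal C \<longleftrightarrow> trm C \<in> Obj C \<and>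
     (\<forall>X \<in> Obj C. bang C X \<in> hom C X (trm C) \<and> (\<forall>f \<in> hom C X (trm C). f = bang C X))"

definition has_products :: "('o, 'm, 'z) sccc_scheme \<Rightarrow> bool" where
  "has_products C \<longleftrightarrow> (\<forall>X \<in> Obj C. \<forall>Y \<in> Obj C.
     prd C X Y \<in> Obj C \<and> pr1 C X Y \<in> hom C (prd C X Y) X \<and> pr2 C X Y \<in> hom C (prd C X Y) Y \<and>
     (\<forall>Z \<in> Obj C. \<forall>f \<in> hom C Z X. \<forall>g \<in> hom C Z Y.
        tup C f g \<in> hom C Z (prd C X Y) \<and>
        comp C (pr1 C X Y) (tup C f g) = f \<and> comp C (pr2 C X Y) (tup C f g) = g \<and>
        (\<forall>h \<in> hom C Z (prd C X Y). comp C (pr1 C X Y) h = f \<and> comp C (pr2 C X Y) h = g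
            \<longrightarrow> h = tup C f g)))"

definition has_exponentials :: "('o, 'm, 'z) sccc_scheme \<Rightarrow> bool" where
  "has_exponentials C \<longleftrightarrow> (\<forall>X \<in> Obj C. \<forall>Y \<in> Obj C.
     ex C X Y \<in> Obj C \<and> ev C X Y \<in> hom C (prd C (ex C X Y) X) Y \<and>
     (\<forall>Z \<in> Obj C. \<forall>f \<in> hom C (prd C Z X) Y.
        cur C Z X Y f \<in> hom C Z (ex C X Y) \<and>
        comp C (ev C X Y) (prodmap C (cur C Z X Y f) (idm C X)) = f \<and>
        (\<forall>h \<in> hom C Z (ex C X Y). comp C (ev C X Y) (prodmap C h (idm C X)) = f
            \<longrightarrow> h = cur C Z X Y f)))"

definition is_endofunctor :: "('o, 'm, 'z) sccc_scheme \<Rightarrow> bool" where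
  "is_endofunctor C \<longleftrightarrow>
     (\<forall>X \<in> Obj C. DO C X \<in> Obj C \<and> DA C (idm C X) = idm C (DO C X))
   \<and> (\<forall>f \<in> Ar C. DA C f \<in> hom C (DO C (dom C f)) (DO C (cod C f)))
   \<and> (\<forall>f \<in> Ar C. \<forall>g \<in> Ar C. cod C f = dom C g \<longrightarrow>
        DA C (comp C g f) = comp C (DA C g) (DA C f))"

definition is_strength :: "('o, 'm, 'z) sccc_scheme \<Rightarrow> bool" where
  "is_strength C \<longleftrightarrow>
     (\<forall>X \<in> Obj C. \<forall>Y \<in> Obj C. st C X Y \<in> hom C (prd C X (DO C Y)) (DO C (prd C X Y)))
   \<and> (\<forall>f \<in> Ar C. \<forall>g \<in> Ar C.
        comp C (st C (cod C f) (cod C g)) (prodmap C f (DA C g))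
        = comp C (DA C (prodmap C f g)) (st C (dom C f) (dom C g)))
   \<and> (\<forall>X \<in> Obj C. comp C (DA C (pr2 C (trm C) X)) (st C (trm C) X) = pr2 C (trm C) (DO C X))
   \<and> (\<forall>X \<in> Obj C. \<forall>Y \<in> Obj C. \<forall>Z \<in> Obj C.
        comp C (DA C (assoc C X Y Z)) (st C (prd C X Y) Z)
        = comp C (st C X (prd C Y Z))
            (comp C (prodmap C (idm C X) (st C Y Z)) (assoc C X Y (DO C Z))))"

definition is_model :: "('o, 'm, 'z) sccc_scheme \<Rightarrow> 'o \<Rightarrow> bool" where
  "is_model C b \<longleftrightarrow> is_category C \<and> is_terminal C \<and> has_products C \<and> has_exponentials C
     \<and> is_endofunctor C \<and> is_strength C \<and> b \<in> Obj C"

primrec ity :: "('o, 'm, 'z) sccc_scheme \<Rightarrow> 'o \<Rightarrow> ty \<Rightarrow> 'o" where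
  "ity C b Base = b"
| "ity C b One = trm C"
| "ity C b (Prod A B) = prd C (ity C b A) (ity C b B)"
| "ity C b (Arr A B) = ex C (ity C b A) (ity C b B)"
| "ity C b (Dia A) = DO C (ity C b A)"

primrec ictx :: "('o, 'm, 'z) sccc_scheme \<Rightarrow> 'o \<Rightarrow> ty list \<Rightarrow> 'o" where
  "ictx C b [] = trm C"
| "ictx C b (A # \<Gamma>) = prd C (ictx C b \<Gamma>) (ity C b A)"

text \<open>Type inference for (well-typed) terms; the value on ill-typed terms is irrelevant.\<close>
fun tyof :: "ty list \<Rightarrow> tm \<Rightarrow> ty" where
  "tyof \<Gamma> (Var i) = \<Gamma> ! i"
| "tyof \<Gamma> Unit = One"
| "tyof \<Gamma> (Pair t u) = Prod (tyof \<Gamma> t) (tyof \<Gamma> u)"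
| "tyof \<Gamma> (Fst t) = (case tyof \<Gamma> t of Prod A B \<Rightarrow> A | _ \<Rightarrow> One)"
| "tyof \<Gamma> (Snd t) = (case tyof \<Gamma> t of Prod A B \<Rightarrow> B | _ \<Rightarrow> One)"
| "tyof \<Gamma> (Lam A t) = Arr A (tyof (A # \<Gamma>) t)"
| "tyof \<Gamma> (App t u) = (case tyof \<Gamma> t of Arr A B \<Rightarrow> B | _ \<Rightarrow> One)"
| "tyof \<Gamma> (Letmap t u) = (case tyof \<Gamma> t of Dia A \<Rightarrow> Dia (tyof (A # \<Gamma>) u) | _ \<Rightarrow> One)"

fun ivar :: "('o, 'm, 'z) sccc_scheme \<Rightarrow> 'o \<Rightarrow> ty list \<Rightarrow> nat \<Rightarrow> 'm" where
  "ivar C b [] i = undefined"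
| "ivar C b (A # \<Gamma>) 0 = pr2 C (ictx C b \<Gamma>) (ity C b A)"
| "ivar C b (A # \<Gamma>) (Suc i) = comp C (ivar C b \<Gamma> i) (pr1 C (ictx C b \<Gamma>) (ity C b A))"

fun sem :: "('o, 'm, 'z) sccc_scheme \<Rightarrow> 'o \<Rightarrow> ty list \<Rightarrow> tm \<Rightarrow> 'm" where
  "sem C b \<Gamma> (Var i) = ivar C b \<Gamma> i"
| "sem C b \<Gamma> Unit = bang C (ictx C b \<Gamma>)"
| "sem C b \<Gamma> (Pair t u) = tup C (sem C b \<Gamma> t) (sem C b \<Gamma> u)"
| "sem C b \<Gamma> (Fst t) = (case tyof \<Gamma> t of
      Prod A B \<Rightarrow> comp C (pr1 C (ity C b A) (ity C b B)) (sem C b \<Gamma> t) | _ \<Rightarrow> undefined)"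
| "sem C b \<Gamma> (Snd t) = (case tyof \<Gamma> t of
      Prod A B \<Rightarrow> comp C (pr2 C (ity C b A) (ity C b B)) (sem C b \<Gamma> t) | _ \<Rightarrow> undefined)"
| "sem C b \<Gamma> (Lam A t) =
      cur C (ictx C b \<Gamma>) (ity C b A) (ity C b (tyof (A # \<Gamma>) t)) (sem C b (A # \<Gamma>) t)"
| "sem C b \<Gamma> (App t u) = (case tyof \<Gamma> t of
      Arr A B \<Rightarrow> comp C (ev C (ity C b A) (ity C b B)) (tup C (sem C b \<Gamma> t) (sem C b \<Gamma> u))
    | _ \<Rightarrow> undefined)"
| "sem C b \<Gamma> (Letmap t u) = (case tyof \<Gamma> t of
      Dia A \<Rightarrow> comp C (DA C (sem C b (A # \<Gamma>) u))
                 (comp C (st C (ictx C b \<Gamma>) (ity C b A))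
                    (tup C (idm C (ictx C b \<Gamma>)) (sem C b \<Gamma> t)))
    | _ \<Rightarrow> undefined)"

end

theory Submission
  imports Defs "HOL-Library.Countable"
begin

(* Soundness: sem is an instance of an interpretation relative to an environment of
   generalised elements X -> [[A_i]]. That interpretation is natural in X and turns
   substitution into composition, so the beta and eta laws of the cartesian closed part follow
   from the universal properties, letmap-eta from the unit law of the strength, and
   letmap-beta from its naturality together with its associativity law, instantiated along
   the diagonal X -> X * X.

   Completeness: in the syntactic category, whose arrows A -> B are the equivalence classes of
   terms x : A |- t : B, D acts by letmap and the strength is
   letmap y = snd x in <fst x, y>. It is a cartesian closed category with a strong
   endofunctor, and it interprets a term as its own class, the context being packed into a
   single variable of product type.
   Types and terms are countable, so this model can be coded into (nat, nat) sccc. *)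

section \<open>Weakening and substitution\<close>

lemma lift_lift:
  "i \<le> k \<Longrightarrow> lift (lift t i) (Suc k) = lift (lift t k) i"
  by (induct t arbitrary: i k) auto

lemma lift_subst:
  "j \<le> i \<Longrightarrow> lift (subst t j s) i = subst (lift t (Suc i)) j (lift s i)"
  by (induct t arbitrary: i j s) (auto simp: lift_lift split: nat.split)

lemma lift_subst_le:
  "i \<le> j \<Longrightarrow> lift (subst t j s) i = subst (lift t i) (Suc j) (lift s i)"
  by (induct t arbitrary: i j s) (auto simp: lift_lift)

lemma subst_lift [simp]: "subst (lift t k) k s = t"
  by (induct t arbitrary: k s) simp_all

lemma subst_subst:
  "i \<le> j \<Longrightarrow> subst (subst t (Suc j) (lift v i)) i (subst u j v) = subst (subst t i u) j v"
  by (induct t arbitrary: i j u v)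
    (simp_all add: diff_Suc lift_lift [symmetric] lift_subst_le split: nat.split)

definition ctx_ins :: "nat \<Rightarrow> ty \<Rightarrow> ty list \<Rightarrow> ty list" where
  "ctx_ins k B \<Gamma> = take k \<Gamma> @ B # drop k \<Gamma>"

lemma ctx_ins_0 [simp]: "ctx_ins 0 B \<Gamma> = B # \<Gamma>"
  by (simp add: ctx_ins_def)

lemma ctx_ins_Suc [simp]: "ctx_ins (Suc k) B (A # \<Gamma>) = A # ctx_ins k B \<Gamma>"
  by (simp add: ctx_ins_def)

lemma length_ctx_ins [simp]: "k \<le> length \<Gamma> \<Longrightarrow> length (ctx_ins k B \<Gamma>) = Suc (length \<Gamma>)"
  by (simp add: ctx_ins_def)

lemma nth_ctx_ins_less: "i < k \<Longrightarrow> k \<le> length \<Gamma> \<Longrightarrow> ctx_ins k B \<Gamma> ! i = \<Gamma> ! i"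
  by (simp add: ctx_ins_def nth_append)

lemma nth_ctx_ins_eq: "k \<le> length \<Gamma> \<Longrightarrow> ctx_ins k B \<Gamma> ! k = B"
  by (simp add: ctx_ins_def nth_append)

lemma nth_ctx_ins_greater: "k \<le> i \<Longrightarrow> k \<le> length \<Gamma> \<Longrightarrow> ctx_ins k B \<Gamma> ! Suc i = \<Gamma> ! i"
  by (simp add: ctx_ins_def nth_append min_def Suc_diff_le)

lemma typing_lift:
  "typing \<Gamma> t A \<Longrightarrow> k \<le> length \<Gamma> \<Longrightarrow> typing (ctx_ins k B \<Gamma>) (lift t k) A"
proof (induction \<Gamma> t A arbitrary: k rule: typing.induct)
  case (T_Var i \<Gamma>)
  show ?case
  proof (cases "i < k")
    case True
    then show ?thesis using T_Var typing.T_Var[of i "ctx_ins k B \<Gamma>"] by (simp add: nth_ctx_ins_less)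
  next
    case False
    then show ?thesis
      using T_Var typing.T_Var[of "Suc i" "ctx_ins k B \<Gamma>"] by (simp add: nth_ctx_ins_greater)
  qed
next
  case (T_Lam A \<Gamma> t B')
  then show ?case using typing.T_Lam[of A "ctx_ins k B \<Gamma>"] T_Lam.IH[of "Suc k"] by simp
next
  case (T_Letmap \<Gamma> t A u B')
  then show ?case using T_Letmap.IH(2)[of "Suc k"] by (auto intro: typing.T_Letmap)
qed (auto intro: typing.intros)

lemma typing_lift0: "typing \<Gamma> t A \<Longrightarrow> typing (B # \<Gamma>) (lift t 0) A"
  using typing_lift[where k=0 and B=B] by fastforce

lemma typing_subst:
  "typing \<Delta> t A \<Longrightarrow> \<Delta> = ctx_ins k B \<Gamma> \<Longrightarrow> typing \<Gamma> s B \<Longrightarrow> k \<le> length \<Gamma>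
   \<Longrightarrow> typing \<Gamma> (subst t k s) A"
proof (induction \<Delta> t A arbitrary: \<Gamma> k s rule: typing.induct)
  case (T_Var i \<Delta>)
  consider "i < k" | "i = k" | "k < i" by linarith
  then show ?case
  proof cases
    case 1
    then show ?thesis using T_Var typing.T_Var[of i \<Gamma>] by (simp add: nth_ctx_ins_less)
  next
    case 2
    then show ?thesis using T_Var by (simp add: nth_ctx_ins_eq)
  next
    case 3
    then show ?thesis
      using T_Var typing.T_Var[of "i - 1" \<Gamma>] nth_ctx_ins_greater[of k "i - 1" \<Gamma> B] by simp
  qed
next
  case (T_Lam A \<Delta> t B')
  then show ?case
    using T_Lam.IH[where \<Gamma>="A # \<Gamma>" and k="Suc k"] typing_lift0 by (simp add: typing.T_Lam)
next
  case (T_Letmap \<Delta> t A u B')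
  have "typing (A # \<Gamma>) (subst u (Suc k) (lift s 0)) B'"
    using T_Letmap.IH(2)[where \<Gamma>="A # \<Gamma>" and k="Suc k"] T_Letmap.prems typing_lift0 by simp
  with T_Letmap show ?case by (auto intro: typing.T_Letmap)
qed (fastforce intro: typing.intros)+

lemma typing_subst0: "typing (B # \<Gamma>) t A \<Longrightarrow> typing \<Gamma> s B \<Longrightarrow> typing \<Gamma> (subst t 0 s) A"
  by (erule typing_subst[where k=0 and B=B]) simp_all

lemma typing_append: "typing \<Gamma> t A \<Longrightarrow> typing (\<Gamma> @ \<Delta>) t A"
proof (induction \<Gamma> t A rule: typing.induct)
  case (T_Var i \<Gamma>)
  then show ?case using typing.T_Var[of i "\<Gamma> @ \<Delta>"] by (simp add: nth_append)
qed (auto intro: typing.intros)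

lemma tyof_typing: "typing \<Gamma> t A \<Longrightarrow> tyof \<Gamma> t = A"
  by (induction \<Gamma> t A rule: typing.induct) auto

text \<open>Rewriting with typing_iff lets the simplifier decide the typing judgements of the
  concrete terms that occur in the term model.\<close>

fun check :: "ty list \<Rightarrow> tm \<Rightarrow> ty option" where
  "check \<Gamma> (Var i) = (if i < length \<Gamma> then Some (\<Gamma> ! i) else None)"
| "check \<Gamma> Unit = Some One"
| "check \<Gamma> (Pair t u) =
    (case (check \<Gamma> t, check \<Gamma> u) of (Some A, Some B) \<Rightarrow> Some (Prod A B) | _ \<Rightarrow> None)"
| "check \<Gamma> (Fst t) = (case check \<Gamma> t of Some (Prod A B) \<Rightarrow> Some A | _ \<Rightarrow> None)"
| "check \<Gamma> (Snd t) = (case check \<Gamma> t of Some (Prod A B) \<Rightarrow> Some B | _ \<Rightarrow> None)"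
| "check \<Gamma> (Lam A t) = map_option (Arr A) (check (A # \<Gamma>) t)"
| "check \<Gamma> (App t u) =
    (case (check \<Gamma> t, check \<Gamma> u) of (Some (Arr A B), Some A') \<Rightarrow> if A = A' then Some B else None
     | _ \<Rightarrow> None)"
| "check \<Gamma> (Letmap t u) =
    (case check \<Gamma> t of Some (Dia A) \<Rightarrow> map_option Dia (check (A # \<Gamma>) u) | _ \<Rightarrow> None)"

lemma typing_iff: "typing \<Gamma> t A \<longleftrightarrow> check \<Gamma> t = Some A"
proof
  show "typing \<Gamma> t A \<Longrightarrow> check \<Gamma> t = Some A"
    by (induction \<Gamma> t A rule: typing.induct) auto
  show "check \<Gamma> t = Some A \<Longrightarrow> typing \<Gamma> t A"
    by (induction t arbitrary: \<Gamma> A)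
      (fastforce split: option.splits ty.splits if_splits intro: typing.intros)+
qed

primrec scoped :: "nat \<Rightarrow> tm \<Rightarrow> bool" where
  "scoped n (Var i) = (i < n)"
| "scoped n Unit = True"
| "scoped n (Pair t u) = (scoped n t \<and> scoped n u)"
| "scoped n (Fst t) = scoped n t"
| "scoped n (Snd t) = scoped n t"
| "scoped n (Lam A t) = scoped (Suc n) t"
| "scoped n (App t u) = (scoped n t \<and> scoped n u)"
| "scoped n (Letmap t u) = (scoped n t \<and> scoped (Suc n) u)"

lemma typing_scoped: "typing \<Gamma> t A \<Longrightarrow> scoped (length \<Gamma>) t"
  by (induction \<Gamma> t A rule: typing.induct) auto

lemma scoped_lift_Suc: "scoped n s \<Longrightarrow> scoped (Suc n) (lift s k)"
  by (induction s arbitrary: n k) auto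

lemma scoped_subst: "scoped (Suc j) t \<Longrightarrow> scoped n s \<Longrightarrow> j \<le> n \<Longrightarrow> scoped n (subst t j s)"
  by (induction t arbitrary: j n s) (auto simp: scoped_lift_Suc)

lemma lift_scoped: "scoped n t \<Longrightarrow> n \<le> k \<Longrightarrow> lift t k = t"
  by (induction t arbitrary: n k) auto

lemma subst_scoped: "scoped n t \<Longrightarrow> n \<le> k \<Longrightarrow> subst t k s = t"
  by (induction t arbitrary: n k s) auto

lemma subst_Var_scoped: "scoped (Suc k) t \<Longrightarrow> subst t k (Var k) = t"
  by (induction t arbitrary: k) auto

lemma subst_Var_Suc_scoped: "scoped (Suc k) t \<Longrightarrow> subst t k (Var (Suc k)) = lift t k"
  by (induction t arbitrary: k) auto

text \<open>Terms scoped in one variable are the arrows of the term model; for them the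
  substitution calculus simplifies to the following rules.\<close>

lemma scoped1_simps [simp]:
  assumes "scoped 1 t"
  shows "scoped n s \<Longrightarrow> scoped n (subst t 0 s)"
    and "subst t (Suc k) s = t"
    and "lift t (Suc k) = t"
    and "subst t 0 (Var 0) = t"
    and "subst t 0 (Var 1) = lift t 0"
    and "subst t 0 (Var (Suc 0)) = lift t 0"
    and "subst (subst t 0 u) k s = subst t 0 (subst u k s)"
    and "lift (subst t 0 s) k = subst t 0 (lift s k)"
  using assms scoped_subst[of 0 t n s] subst_scoped[of 1 t "Suc k"] lift_scoped[of 1 t "Suc k"]
    subst_Var_scoped[of 0 t] subst_Var_Suc_scoped[of 0 t]
    subst_subst[of 0 k t s u] lift_subst[of 0 k t s]
  by simp_all

section \<open>The equational theory\<close>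

lemma typing_Var0 [intro]: "typing (A # \<Gamma>) (Var 0) A"
  using typing.T_Var[of 0 "A # \<Gamma>"] by simp

lemma eqv_typing: "eqv \<Gamma> t u A \<Longrightarrow> typing \<Gamma> t A \<and> typing \<Gamma> u A"
proof (induction rule: eqv.induct)
  case (fun_eta \<Gamma> t A B)
  then show ?case using typing_lift0[OF fun_eta] by (auto intro: typing.intros)
next
  case (letmap_beta \<Gamma> t A u B u' C)
  have "typing (B # A # \<Gamma>) (lift u' 1) C"
    using typing_lift[OF letmap_beta(3), of 1 A] by simp
  then have "typing (A # \<Gamma>) (subst (lift u' 1) 0 u) C"
    using typing_subst0 letmap_beta(2) by blast
  with letmap_beta show ?case by (auto intro: typing.intros)
qed (auto intro: typing.intros typing_subst0)

lemma eqv_typing1: "eqv \<Gamma> t u A \<Longrightarrow> typing \<Gamma> t A"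
  and eqv_typing2: "eqv \<Gamma> t u A \<Longrightarrow> typing \<Gamma> u A"
  using eqv_typing by blast+

lemma eqv_tyof: "eqv \<Gamma> t u A \<Longrightarrow> tyof \<Gamma> t = A \<and> tyof \<Gamma> u = A"
  using eqv_typing tyof_typing by blast

lemma eqv_lift:
  "eqv \<Gamma> t u A \<Longrightarrow> k \<le> length \<Gamma> \<Longrightarrow> eqv (ctx_ins k B \<Gamma>) (lift t k) (lift u k) A"
proof (induction arbitrary: k rule: eqv.induct)
  case (C_Lam A \<Gamma> t t' B')
  then show ?case using C_Lam.IH[of "Suc k"] by (simp add: eqv.C_Lam)
next
  case (C_Letmap \<Gamma> t t' A u u' B')
  then show ?case using C_Letmap.IH(2)[of "Suc k"] by (auto intro: eqv.C_Letmap)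
next
  case (fun_eta \<Gamma> t A B')
  then show ?case
    using eqv.fun_eta[OF typing_lift[OF fun_eta(1) fun_eta(2)]] lift_lift[of 0 k t] by simp
next
  case (fun_beta A \<Gamma> t B' u)
  have "typing (A # ctx_ins k B \<Gamma>) (lift t (Suc k)) B'"
    using typing_lift[OF fun_beta(1), of "Suc k" B] fun_beta(3) by simp
  then show ?case
    using eqv.fun_beta typing_lift[OF fun_beta(2,3)] lift_subst[of 0 k t u] by simp
next
  case (letmap_beta \<Gamma> t A u B' u' C)
  have "lift (subst (lift u' 1) 0 u) (Suc k) = subst (lift (lift u' (Suc k)) 1) 0 (lift u (Suc k))"
    using lift_subst[of 0 "Suc k" "lift u' 1" u] lift_lift[of 1 "Suc k" u'] by simp
  moreover have "typing (A # ctx_ins k B \<Gamma>) (lift u (Suc k)) B'"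
    and "typing (B' # ctx_ins k B \<Gamma>) (lift u' (Suc k)) C"
    using typing_lift[OF letmap_beta(2), of "Suc k" B] typing_lift[OF letmap_beta(3), of "Suc k" B]
      letmap_beta(4) by simp_all
  ultimately show ?case
    using eqv.letmap_beta[OF typing_lift[OF letmap_beta(1) letmap_beta(4)]] by simp
qed (auto intro: eqv.intros typing_lift)

lemma eqv_lift0: "eqv \<Gamma> t u A \<Longrightarrow> eqv (B # \<Gamma>) (lift t 0) (lift u 0) A"
  using eqv_lift[where k=0 and B=B] by fastforce

lemma eqv_subst:
  "eqv \<Delta> t u A \<Longrightarrow> \<Delta> = ctx_ins k B \<Gamma> \<Longrightarrow> typing \<Gamma> s B \<Longrightarrow> k \<le> length \<Gamma>
   \<Longrightarrow> eqv \<Gamma> (subst t k s) (subst u k s) A"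
proof (induction arbitrary: \<Gamma> k s rule: eqv.induct)
  case (E_trans \<Delta> t u A v)
  show ?case using E_trans.IH(1)[OF E_trans.prems] E_trans.IH(2)[OF E_trans.prems]
    by (rule eqv.E_trans)
next
  case (C_Lam A \<Delta> t t' B')
  then show ?case using C_Lam.IH[where \<Gamma>="A # \<Gamma>" and k="Suc k"] typing_lift0
    by (simp add: eqv.C_Lam)
next
  case (C_Letmap \<Delta> t t' A u u' B')
  have "eqv (A # \<Gamma>) (subst u (Suc k) (lift s 0)) (subst u' (Suc k) (lift s 0)) B'"
    using C_Letmap.IH(2)[where \<Gamma>="A # \<Gamma>" and k="Suc k"] C_Letmap.prems typing_lift0 by simp
  with C_Letmap show ?case by (auto intro: eqv.C_Letmap)
next
  case (fun_eta \<Delta> t A B')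
  then show ?case
    using eqv.fun_eta[OF typing_subst[OF fun_eta]] lift_subst_le[of 0 k t s] by simp
next
  case (fun_beta A \<Delta> t B' u)
  have t: "typing (A # \<Gamma>) (subst t (Suc k) (lift s 0)) B'"
    using typing_subst[OF fun_beta(1), of "Suc k" B "A # \<Gamma>"] fun_beta typing_lift0 by simp
  show ?case
    using eqv.fun_beta[OF t typing_subst[OF fun_beta(2-5)]] subst_subst[of 0 k t s u] by simp
next
  case (letmap_beta \<Delta> t A u B' u' C)
  have u: "typing (A # \<Gamma>) (subst u (Suc k) (lift s 0)) B'"
    using typing_subst[OF letmap_beta(2), of "Suc k" B "A # \<Gamma>"] letmap_beta typing_lift0 by simp
  have u': "typing (B' # \<Gamma>) (subst u' (Suc k) (lift s 0)) C"
    using typing_subst[OF letmap_beta(3), of "Suc k" B "B' # \<Gamma>"] letmap_beta typing_lift0 by simp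
  have "lift (subst u' (Suc k) (lift s 0)) 1 = subst (lift u' 1) (Suc (Suc k)) (lift (lift s 0) 0)"
    using lift_subst_le[of 1 "Suc k" u' "lift s 0"] lift_lift[of 0 0 s] by simp
  moreover have "subst (subst (lift u' 1) (Suc (Suc k)) (lift (lift s 0) 0)) 0 (subst u (Suc k) (lift s 0))
      = subst (subst (lift u' 1) 0 u) (Suc k) (lift s 0)"
    using subst_subst[of 0 "Suc k" "lift u' 1" "lift s 0" u] by simp
  ultimately show ?case
    using eqv.letmap_beta[OF typing_subst[OF letmap_beta(1) letmap_beta(4-6)] u u'] by simp
next
  case (C_Fst \<Delta> t t' A B')
  then show ?case by (metis eqv.C_Fst subst.simps(4))
next
  case (C_Snd \<Delta> t t' A B')
  then show ?case by (metis eqv.C_Snd subst.simps(5))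
next
  case (C_App \<Delta> t t' A B' u u')
  then show ?case by (metis eqv.C_App subst.simps(7))
qed (auto intro: eqv.intros typing_subst)

lemma eqv_subst_arg:
  "typing \<Delta> t A \<Longrightarrow> \<Delta> = ctx_ins k B \<Gamma> \<Longrightarrow> eqv \<Gamma> s s' B \<Longrightarrow> k \<le> length \<Gamma>
   \<Longrightarrow> eqv \<Gamma> (subst t k s) (subst t k s') A"
proof (induction arbitrary: \<Gamma> k s s' rule: typing.induct)
  case (T_Var i \<Delta>)
  consider "i < k" | "i = k" | "k < i" by linarith
  then show ?case
  proof cases
    case 1
    then show ?thesis using T_Var typing.T_Var[of i \<Gamma>] by (simp add: nth_ctx_ins_less eqv.E_refl)
  next
    case 2
    then show ?thesis using T_Var by (simp add: nth_ctx_ins_eq)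
  next
    case 3
    then show ?thesis using T_Var typing.T_Var[of "i - 1" \<Gamma>] nth_ctx_ins_greater[of k "i - 1" \<Gamma> B]
      by (simp add: eqv.E_refl)
  qed
next
  case (T_Lam A \<Delta> t B')
  then show ?case
    using T_Lam.IH[where \<Gamma>="A # \<Gamma>" and k="Suc k"] eqv_lift0 by (simp add: eqv.C_Lam)
next
  case (T_Letmap \<Delta> t A u B')
  have "eqv (A # \<Gamma>) (subst u (Suc k) (lift s 0)) (subst u (Suc k) (lift s' 0)) B'"
    using T_Letmap.IH(2)[where \<Gamma>="A # \<Gamma>" and k="Suc k"] T_Letmap.prems eqv_lift0 by simp
  moreover have "eqv \<Gamma> (subst t k s) (subst t k s') (Dia A)"
    using T_Letmap.IH(1)[OF T_Letmap.prems] .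
  ultimately show ?case by (simp add: eqv.C_Letmap)
next
  case (T_Fst \<Delta> t A B')
  then show ?case by (metis eqv.C_Fst subst.simps(4))
next
  case (T_Snd \<Delta> t A B')
  then show ?case by (metis eqv.C_Snd subst.simps(5))
next
  case (T_App \<Delta> t A B' u)
  then show ?case by (metis eqv.C_App subst.simps(7))
qed (auto intro: eqv.intros typing.intros)

lemma eqv_subst0:
  "eqv (B # \<Gamma>) t u A \<Longrightarrow> eqv \<Gamma> s s' B \<Longrightarrow> eqv \<Gamma> (subst t 0 s) (subst u 0 s') A"
  using eqv_subst[where k=0 and B=B and \<Gamma>=\<Gamma> and s=s] eqv_typing1[of \<Gamma> s s' B]
    eqv_subst_arg[OF eqv_typing2, where k=0 and B=B and \<Gamma>=\<Gamma> and s=s and s'=s']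
  by (fastforce intro: eqv.E_trans)

lemma eqv_append: "eqv \<Gamma> t u A \<Longrightarrow> eqv (\<Gamma> @ \<Delta>) t u A"
proof (induction rule: eqv.induct)
  case (fun_beta A \<Gamma> t B u)
  then show ?case
    using eqv.fun_beta[OF typing_append[OF fun_beta(1), of \<Delta>, simplified] typing_append] by simp
next
  case (letmap_beta \<Gamma> t A u B u' C)
  then show ?case
    using eqv.letmap_beta[OF typing_append typing_append[OF letmap_beta(2), of \<Delta>, simplified]
        typing_append[OF letmap_beta(3), of \<Delta>, simplified]] by simp
qed (auto intro: eqv.intros typing_append)

section \<open>Models\<close>

locale model =
  fixes C :: "('o, 'm, 'z) sccc_scheme" and b :: 'o
  assumes is_model: "is_model C b"
begin

lemma category: "is_category C" and terminal: "is_terminal C" and products: "has_products C"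
  and exponentials: "has_exponentials C" and endofunctor: "is_endofunctor C" and strength: "is_strength C"
  and base_obj: "b \<in> Obj C"
  using is_model unfolding is_model_def by auto

lemma dom_obj[simp]: "f \<in> Ar C \<Longrightarrow> dom C f \<in> Obj C"
  and cod_obj[simp]: "f \<in> Ar C \<Longrightarrow> cod C f \<in> Obj C"
  using category unfolding is_category_def by auto

lemma id_ar[simp]: "X \<in> Obj C \<Longrightarrow> idm C X \<in> Ar C"
  and id_dom[simp]: "X \<in> Obj C \<Longrightarrow> dom C (idm C X) = X"
  and id_cod[simp]: "X \<in> Obj C \<Longrightarrow> cod C (idm C X) = X"
  using category unfolding is_category_def hom_def by auto

lemma comp_ar[simp]: "f \<in> Ar C \<Longrightarrow> g \<in> Ar C \<Longrightarrow> cod C f = dom C g \<Longrightarrow> comp C g f \<in> Ar C"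
  and comp_dom[simp]: "f \<in> Ar C \<Longrightarrow> g \<in> Ar C \<Longrightarrow> cod C f = dom C g \<Longrightarrow> dom C (comp C g f) = dom C f"
  and comp_cod[simp]: "f \<in> Ar C \<Longrightarrow> g \<in> Ar C \<Longrightarrow> cod C f = dom C g \<Longrightarrow> cod C (comp C g f) = cod C g"
  using category unfolding is_category_def hom_def by auto

lemma id_comp[simp]: "f \<in> Ar C \<Longrightarrow> cod C f = Y \<Longrightarrow> comp C (idm C Y) f = f"
  and comp_id[simp]: "f \<in> Ar C \<Longrightarrow> dom C f = X \<Longrightarrow> comp C f (idm C X) = f"
  using category unfolding is_category_def by auto

lemma comp_assoc[simp]: "f \<in> Ar C \<Longrightarrow> g \<in> Ar C \<Longrightarrow> h \<in> Ar C \<Longrightarrow> cod C f = dom C g \<Longrightarrow> cod C g = dom C h \<Longrightarrow>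
   comp C (comp C h g) f = comp C h (comp C g f)"
  using category unfolding is_category_def by auto

lemma trm_obj[simp]: "trm C \<in> Obj C"
  and bang_ar[simp]: "X \<in> Obj C \<Longrightarrow> bang C X \<in> Ar C"
  and bang_dom[simp]: "X \<in> Obj C \<Longrightarrow> dom C (bang C X) = X"
  and bang_cod[simp]: "X \<in> Obj C \<Longrightarrow> cod C (bang C X) = trm C"
  using terminal unfolding is_terminal_def hom_def by auto

lemma bang_uniq: "f \<in> Ar C \<Longrightarrow> cod C f = trm C \<Longrightarrow> f = bang C (dom C f)"
  using terminal unfolding is_terminal_def hom_def by auto

lemma prd_obj[simp]: "X \<in> Obj C \<Longrightarrow> Y \<in> Obj C \<Longrightarrow> prd C X Y \<in> Obj C"
  and pr1_ar[simp]: "X \<in> Obj C \<Longrightarrow> Y \<in> Obj C \<Longrightarrow> pr1 C X Y \<in> Ar C"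
  and pr1_dom[simp]: "X \<in> Obj C \<Longrightarrow> Y \<in> Obj C \<Longrightarrow> dom C (pr1 C X Y) = prd C X Y"
  and pr1_cod[simp]: "X \<in> Obj C \<Longrightarrow> Y \<in> Obj C \<Longrightarrow> cod C (pr1 C X Y) = X"
  and pr2_ar[simp]: "X \<in> Obj C \<Longrightarrow> Y \<in> Obj C \<Longrightarrow> pr2 C X Y \<in> Ar C"
  and pr2_dom[simp]: "X \<in> Obj C \<Longrightarrow> Y \<in> Obj C \<Longrightarrow> dom C (pr2 C X Y) = prd C X Y"
  and pr2_cod[simp]: "X \<in> Obj C \<Longrightarrow> Y \<in> Obj C \<Longrightarrow> cod C (pr2 C X Y) = Y"
  using products unfolding has_products_def hom_def by auto

lemma tup_props:
  assumes "f \<in> Ar C" "g \<in> Ar C" "dom C f = dom C g"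
  shows "tup C f g \<in> Ar C \<and> dom C (tup C f g) = dom C f \<and> cod C (tup C f g) = prd C (cod C f) (cod C g)
    \<and> comp C (pr1 C (cod C f) (cod C g)) (tup C f g) = f
    \<and> comp C (pr2 C (cod C f) (cod C g)) (tup C f g) = g"
proof -
  let ?X = "cod C f" and ?Y = "cod C g" and ?Z = "dom C f"
  have X: "?X \<in> Obj C" and Y: "?Y \<in> Obj C" and Z: "?Z \<in> Obj C" using assms by simp_all
  have hf: "f \<in> hom C ?Z ?X" and hg: "g \<in> hom C ?Z ?Y" using assms by (simp_all add: hom_def)
  have "\<forall>Z \<in> Obj C. \<forall>f \<in> hom C Z ?X. \<forall>g \<in> hom C Z ?Y.
        tup C f g \<in> hom C Z (prd C ?X ?Y) \<and>
        comp C (pr1 C ?X ?Y) (tup C f g) = f \<and> comp C (pr2 C ?X ?Y) (tup C f g) = g"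
    using products X Y unfolding has_products_def by blast
  then have "tup C f g \<in> hom C ?Z (prd C ?X ?Y) \<and>
        comp C (pr1 C ?X ?Y) (tup C f g) = f \<and> comp C (pr2 C ?X ?Y) (tup C f g) = g"
    using Z hf hg by blast
  then show ?thesis by (simp add: hom_def)
qed

lemma tup_ar[simp]: "f \<in> Ar C \<Longrightarrow> g \<in> Ar C \<Longrightarrow> dom C f = dom C g \<Longrightarrow> tup C f g \<in> Ar C"
  and tup_dom[simp]: "f \<in> Ar C \<Longrightarrow> g \<in> Ar C \<Longrightarrow> dom C f = dom C g \<Longrightarrow> dom C (tup C f g) = dom C f"
  and tup_cod[simp]: "f \<in> Ar C \<Longrightarrow> g \<in> Ar C \<Longrightarrow> dom C f = dom C g
    \<Longrightarrow> cod C (tup C f g) = prd C (cod C f) (cod C g)"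
  using tup_props by auto

lemma pr1_tup[simp]: "f \<in> Ar C \<Longrightarrow> g \<in> Ar C \<Longrightarrow> dom C f = dom C g \<Longrightarrow> cod C f = X \<Longrightarrow> cod C g = Y \<Longrightarrow>
    comp C (pr1 C X Y) (tup C f g) = f"
  and pr2_tup[simp]: "f \<in> Ar C \<Longrightarrow> g \<in> Ar C \<Longrightarrow> dom C f = dom C g \<Longrightarrow> cod C f = X \<Longrightarrow> cod C g = Y \<Longrightarrow>
    comp C (pr2 C X Y) (tup C f g) = g"
  using tup_props by auto

lemma tup_unique: "h \<in> Ar C \<Longrightarrow> cod C h = prd C X Y \<Longrightarrow> X \<in> Obj C \<Longrightarrow> Y \<in> Obj C \<Longrightarrow>
    h = tup C (comp C (pr1 C X Y) h) (comp C (pr2 C X Y) h)"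
proof -
  assume a: "h \<in> Ar C" "cod C h = prd C X Y" "X \<in> Obj C" "Y \<in> Obj C"
  let ?Z = "dom C h"
  have "h \<in> hom C ?Z (prd C X Y)" using a by (simp add: hom_def)
  moreover have "comp C (pr1 C X Y) h \<in> hom C ?Z X" "comp C (pr2 C X Y) h \<in> hom C ?Z Y"
    using a by (simp_all add: hom_def)
  ultimately show ?thesis using products a(3,4) dom_obj[OF a(1)] unfolding has_products_def by blast
qed

lemma pr1_tup_assoc[simp]: "f \<in> Ar C \<Longrightarrow> g \<in> Ar C \<Longrightarrow> dom C f = dom C g \<Longrightarrow> cod C f = X \<Longrightarrow> cod C g = Y \<Longrightarrow>
    h \<in> Ar C \<Longrightarrow> cod C h = dom C f \<Longrightarrow> comp C (pr1 C X Y) (comp C (tup C f g) h) = comp C f h"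
  and pr2_tup_assoc[simp]: "f \<in> Ar C \<Longrightarrow> g \<in> Ar C \<Longrightarrow> dom C f = dom C g \<Longrightarrow> cod C f = X \<Longrightarrow> cod C g = Y \<Longrightarrow>
    h \<in> Ar C \<Longrightarrow> cod C h = dom C f \<Longrightarrow> comp C (pr2 C X Y) (comp C (tup C f g) h) = comp C g h"
  by (metis comp_assoc pr1_tup tup_ar tup_cod tup_dom pr1_ar pr1_dom cod_obj)
     (metis comp_assoc pr2_tup tup_ar tup_cod tup_dom pr2_ar pr2_dom cod_obj)

lemma tup_comp[simp]: "f \<in> Ar C \<Longrightarrow> g \<in> Ar C \<Longrightarrow> dom C f = dom C g \<Longrightarrow> h \<in> Ar C \<Longrightarrow> cod C h = dom C f \<Longrightarrow>
   comp C (tup C f g) h = tup C (comp C f h) (comp C g h)"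
proof -
  assume a: "f \<in> Ar C" "g \<in> Ar C" "dom C f = dom C g" "h \<in> Ar C" "cod C h = dom C f"
  have "comp C (tup C f g) h \<in> Ar C" "cod C (comp C (tup C f g) h) = prd C (cod C f) (cod C g)"
    using a by simp_all
  from tup_unique[OF this] show ?thesis using a by simp
qed

lemma tup_eta[simp]: "h \<in> Ar C \<Longrightarrow> cod C h = prd C X Y \<Longrightarrow> X \<in> Obj C \<Longrightarrow> Y \<in> Obj C \<Longrightarrow>
    tup C (comp C (pr1 C X Y) h) (comp C (pr2 C X Y) h) = h"
  using tup_unique by metis

lemma tup_pr[simp]: "X \<in> Obj C \<Longrightarrow> Y \<in> Obj C \<Longrightarrow> tup C (pr1 C X Y) (pr2 C X Y) = idm C (prd C X Y)"
  using tup_eta[of "idm C (prd C X Y)" X Y] by simp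

lemma ex_obj[simp]: "X \<in> Obj C \<Longrightarrow> Y \<in> Obj C \<Longrightarrow> ex C X Y \<in> Obj C"
  and ev_ar[simp]: "X \<in> Obj C \<Longrightarrow> Y \<in> Obj C \<Longrightarrow> ev C X Y \<in> Ar C"
  and ev_dom[simp]: "X \<in> Obj C \<Longrightarrow> Y \<in> Obj C \<Longrightarrow> dom C (ev C X Y) = prd C (ex C X Y) X"
  and ev_cod[simp]: "X \<in> Obj C \<Longrightarrow> Y \<in> Obj C \<Longrightarrow> cod C (ev C X Y) = Y"
  using exponentials unfolding has_exponentials_def hom_def by auto

lemma cur_props:
  assumes "f \<in> Ar C" "dom C f = prd C Z X" "cod C f = Y" "Z \<in> Obj C" "X \<in> Obj C"
  shows "cur C Z X Y f \<in> Ar C \<and> dom C (cur C Z X Y f) = Z \<and> cod C (cur C Z X Y f) = ex C X Y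
     \<and> comp C (ev C X Y) (prodmap C (cur C Z X Y f) (idm C X)) = f
     \<and> (\<forall>h \<in> hom C Z (ex C X Y). comp C (ev C X Y) (prodmap C h (idm C X)) = f \<longrightarrow> h = cur C Z X Y f)"
proof -
  have "Y \<in> Obj C" using assms cod_obj by blast
  moreover have "f \<in> hom C (prd C Z X) Y" using assms by (simp add: hom_def)
  ultimately show ?thesis using exponentials assms(4,5) unfolding has_exponentials_def hom_def by auto
qed

lemma
  assumes "f \<in> Ar C" "dom C f = prd C Z X" "cod C f = Y" "Z \<in> Obj C" "X \<in> Obj C"
  shows cur_ar [simp]: "cur C Z X Y f \<in> Ar C"
    and cur_dom [simp]: "dom C (cur C Z X Y f) = Z"
    and cur_cod [simp]: "cod C (cur C Z X Y f) = ex C X Y"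
  using cur_props[OF assms] by auto

lemma prodmap_eq: "f \<in> Ar C \<Longrightarrow> g \<in> Ar C \<Longrightarrow> dom C f = X \<Longrightarrow> dom C g = Y \<Longrightarrow>
   prodmap C f g = tup C (comp C f (pr1 C X Y)) (comp C g (pr2 C X Y))"
  by (simp add: prodmap_def)

lemma ev_cur_pr: "f \<in> Ar C \<Longrightarrow> dom C f = prd C Z X \<Longrightarrow> cod C f = Y \<Longrightarrow> Z \<in> Obj C \<Longrightarrow> X \<in> Obj C \<Longrightarrow>
   comp C (ev C X Y) (tup C (comp C (cur C Z X Y f) (pr1 C Z X)) (pr2 C Z X)) = f"
  using cur_props[of f Z X Y] prodmap_eq[of "cur C Z X Y f" "idm C X" Z X] by simp

lemma cur_unique: "f \<in> Ar C \<Longrightarrow> dom C f = prd C Z X \<Longrightarrow> cod C f = Y \<Longrightarrow> Z \<in> Obj C \<Longrightarrow> X \<in> Obj C \<Longrightarrow>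
   h \<in> Ar C \<Longrightarrow> dom C h = Z \<Longrightarrow> cod C h = ex C X Y \<Longrightarrow>
   comp C (ev C X Y) (tup C (comp C h (pr1 C Z X)) (pr2 C Z X)) = f \<Longrightarrow> h = cur C Z X Y f"
  using cur_props[of f Z X Y] prodmap_eq[of h "idm C X" Z X] by (simp add: hom_def)

lemma ev_cur[simp]: "f \<in> Ar C \<Longrightarrow> dom C f = prd C Z X \<Longrightarrow> cod C f = Y \<Longrightarrow> Z \<in> Obj C \<Longrightarrow> X \<in> Obj C \<Longrightarrow>
   h \<in> Ar C \<Longrightarrow> k \<in> Ar C \<Longrightarrow> dom C h = dom C k \<Longrightarrow> cod C h = Z \<Longrightarrow> cod C k = X \<Longrightarrow>
   comp C (ev C X Y) (tup C (comp C (cur C Z X Y f) h) k) = comp C f (tup C h k)"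
proof -
  assume a: "f \<in> Ar C" "dom C f = prd C Z X" "cod C f = Y" "Z \<in> Obj C" "X \<in> Obj C"
    "h \<in> Ar C" "k \<in> Ar C" "dom C h = dom C k" "cod C h = Z" "cod C k = X"
  have Y: "Y \<in> Obj C" using a cod_obj by blast
  have "tup C (comp C (cur C Z X Y f) h) k
      = comp C (tup C (comp C (cur C Z X Y f) (pr1 C Z X)) (pr2 C Z X)) (tup C h k)"
    using a by simp
  then have "comp C (ev C X Y) (tup C (comp C (cur C Z X Y f) h) k)
     = comp C (comp C (ev C X Y) (tup C (comp C (cur C Z X Y f) (pr1 C Z X)) (pr2 C Z X))) (tup C h k)"
    using a Y by simp
  then show ?thesis using ev_cur_pr[OF a(1-5)] by simp
qed

lemma cur_comp[simp]: "f \<in> Ar C \<Longrightarrow> dom C f = prd C Z X \<Longrightarrow> cod C f = Y \<Longrightarrow> Z \<in> Obj C \<Longrightarrow> X \<in> Obj C \<Longrightarrow>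
   h \<in> Ar C \<Longrightarrow> cod C h = Z \<Longrightarrow>
   comp C (cur C Z X Y f) h
   = cur C (dom C h) X Y (comp C f (tup C (comp C h (pr1 C (dom C h) X)) (pr2 C (dom C h) X)))"
proof -
  assume a: "f \<in> Ar C" "dom C f = prd C Z X" "cod C f = Y" "Z \<in> Obj C" "X \<in> Obj C"
    "h \<in> Ar C" "cod C h = Z"
  have Y: "Y \<in> Obj C" using a cod_obj by blast
  let ?W = "dom C h"
  have W: "?W \<in> Obj C" using a by simp
  have e: "comp C (comp C (cur C Z X Y f) h) (pr1 C ?W X) = comp C (cur C Z X Y f) (comp C h (pr1 C ?W X))"
    using a W by simp
  show ?thesis
    apply (rule cur_unique)
    using a W Y e by simp_all
qed

lemma DO_obj[simp]: "X \<in> Obj C \<Longrightarrow> DO C X \<in> Obj C"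
  and DA_id[simp]: "X \<in> Obj C \<Longrightarrow> DA C (idm C X) = idm C (DO C X)"
  and DA_ar[simp]: "f \<in> Ar C \<Longrightarrow> DA C f \<in> Ar C"
  and DA_dom[simp]: "f \<in> Ar C \<Longrightarrow> dom C (DA C f) = DO C (dom C f)"
  and DA_cod[simp]: "f \<in> Ar C \<Longrightarrow> cod C (DA C f) = DO C (cod C f)"
  using endofunctor unfolding is_endofunctor_def hom_def by auto

lemma DA_comp: "f \<in> Ar C \<Longrightarrow> g \<in> Ar C \<Longrightarrow> cod C f = dom C g \<Longrightarrow> DA C (comp C g f) = comp C (DA C g) (DA C f)"
  using endofunctor unfolding is_endofunctor_def by auto

lemma st_ar[simp]: "X \<in> Obj C \<Longrightarrow> Y \<in> Obj C \<Longrightarrow> st C X Y \<in> Ar C"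
  and st_dom[simp]: "X \<in> Obj C \<Longrightarrow> Y \<in> Obj C \<Longrightarrow> dom C (st C X Y) = prd C X (DO C Y)"
  and st_cod[simp]: "X \<in> Obj C \<Longrightarrow> Y \<in> Obj C \<Longrightarrow> cod C (st C X Y) = DO C (prd C X Y)"
  using strength unfolding is_strength_def hom_def by auto

lemma st_natural_prodmap: "f \<in> Ar C \<Longrightarrow> g \<in> Ar C \<Longrightarrow>
   comp C (st C (cod C f) (cod C g)) (prodmap C f (DA C g))
   = comp C (DA C (prodmap C f g)) (st C (dom C f) (dom C g))"
  using strength unfolding is_strength_def by auto

lemma st_unit: "X \<in> Obj C \<Longrightarrow> comp C (DA C (pr2 C (trm C) X)) (st C (trm C) X) = pr2 C (trm C) (DO C X)"
  using strength unfolding is_strength_def by auto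

lemma st_assoc: "X \<in> Obj C \<Longrightarrow> Y \<in> Obj C \<Longrightarrow> Z \<in> Obj C \<Longrightarrow>
   comp C (DA C (assoc C X Y Z)) (st C (prd C X Y) Z)
   = comp C (st C X (prd C Y Z)) (comp C (prodmap C (idm C X) (st C Y Z)) (assoc C X Y (DO C Z)))"
  using strength unfolding is_strength_def by auto

lemma DA_comp_assoc: "f \<in> Ar C \<Longrightarrow> g \<in> Ar C \<Longrightarrow> cod C f = dom C g \<Longrightarrow> r \<in> Ar C \<Longrightarrow>
   cod C r = DO C (dom C f) \<Longrightarrow> comp C (DA C g) (comp C (DA C f) r) = comp C (DA C (comp C g f)) r"
  by (simp add: DA_comp)

lemma st_natural: "f \<in> Ar C \<Longrightarrow> g \<in> Ar C \<Longrightarrow> a \<in> Ar C \<Longrightarrow> c \<in> Ar C \<Longrightarrow> dom C a = dom C c \<Longrightarrow>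
   cod C a = dom C f \<Longrightarrow> cod C c = DO C (dom C g) \<Longrightarrow>
   comp C (st C (cod C f) (cod C g)) (tup C (comp C f a) (comp C (DA C g) c))
   = comp C (DA C (tup C (comp C f (pr1 C (dom C f) (dom C g))) (comp C g (pr2 C (dom C f) (dom C g)))))
       (comp C (st C (dom C f) (dom C g)) (tup C a c))"
proof -
  assume a: "f \<in> Ar C" "g \<in> Ar C" "a \<in> Ar C" "c \<in> Ar C" "dom C a = dom C c"
   "cod C a = dom C f" "cod C c = DO C (dom C g)"
  let ?X = "dom C f" and ?Y = "dom C g"
  have "comp C (comp C (st C (cod C f) (cod C g)) (prodmap C f (DA C g))) (tup C a c)
     = comp C (comp C (DA C (prodmap C f g)) (st C ?X ?Y)) (tup C a c)"
    using st_natural_prodmap[OF a(1,2)] by simp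
  then show ?thesis using a by (simp add: prodmap_eq)
qed

abbreviation letmap_arr :: "'o \<Rightarrow> 'o \<Rightarrow> 'm \<Rightarrow> 'm \<Rightarrow> 'm" where
  "letmap_arr X A T U \<equiv> comp C (DA C U) (comp C (st C X A) (tup C (idm C X) T))"

lemma letmap_arr_comp:
  assumes X: "X \<in> Obj C" and A: "A \<in> Obj C"
    and T: "T \<in> Ar C" "dom C T = X" "cod C T = DO C A"
    and U: "U \<in> Ar C" "dom C U = prd C X A"
    and h: "h \<in> Ar C" "cod C h = X"
  shows "comp C (letmap_arr X A T U) h
    = letmap_arr (dom C h) A (comp C T h)
        (comp C U (tup C (comp C h (pr1 C (dom C h) A)) (pr2 C (dom C h) A)))"
proof -
  let ?W = "dom C h"
  let ?h' = "tup C (comp C h (pr1 C ?W A)) (pr2 C ?W A)"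
  have "comp C (st C X A) (tup C (comp C h (idm C ?W)) (comp C (DA C (idm C A)) (comp C T h)))
    = comp C (DA C (tup C (comp C h (pr1 C ?W A)) (comp C (idm C A) (pr2 C ?W A))))
        (comp C (st C ?W A) (tup C (idm C ?W) (comp C T h)))"
    using st_natural[of h "idm C A" "idm C ?W" "comp C T h"] h T A by simp
  then have st_h: "comp C (st C X A) (tup C h (comp C T h))
    = comp C (DA C ?h') (comp C (st C ?W A) (tup C (idm C ?W) (comp C T h)))"
    using X h T A by simp
  have "comp C (letmap_arr X A T U) h = comp C (DA C U) (comp C (st C X A) (tup C h (comp C T h)))"
    using X h T U A by simp
  also have "\<dots> = comp C (DA C U) (comp C (DA C ?h') (comp C (st C ?W A) (tup C (idm C ?W) (comp C T h))))"
    by (simp only: st_h)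
  also have "\<dots> = letmap_arr ?W A (comp C T h) (comp C U ?h')"
    using h T U A by (simp add: DA_comp_assoc)
  finally show ?thesis .
qed

lemma DA_pr2_st: "X \<in> Obj C \<Longrightarrow> A \<in> Obj C \<Longrightarrow> comp C (DA C (pr2 C X A)) (st C X A) = pr2 C X (DO C A)"
proof -
  assume X: "X \<in> Obj C" and A: "A \<in> Obj C"
  let ?h = "tup C (comp C (bang C X) (pr1 C X A)) (pr2 C X A)"
  have h: "?h \<in> Ar C" "dom C ?h = prd C X A" "cod C ?h = prd C (trm C) A" using X A by simp_all
  have p: "pr2 C X A = comp C (pr2 C (trm C) A) ?h" using X A by simp
  have "comp C (st C (trm C) A)
        (tup C (comp C (bang C X) (pr1 C X (DO C A))) (comp C (DA C (idm C A)) (pr2 C X (DO C A))))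
     = comp C (DA C (tup C (comp C (bang C X) (pr1 C X A)) (comp C (idm C A) (pr2 C X A))))
       (comp C (st C X A) (tup C (pr1 C X (DO C A)) (pr2 C X (DO C A))))"
    using st_natural[of "bang C X" "idm C A" "pr1 C X (DO C A)" "pr2 C X (DO C A)"] X A by simp
  then have n: "comp C (DA C ?h) (st C X A)
      = comp C (st C (trm C) A) (tup C (comp C (bang C X) (pr1 C X (DO C A))) (pr2 C X (DO C A)))"
    using X A by simp
  have "comp C (DA C (pr2 C X A)) (st C X A)
      = comp C (comp C (DA C (pr2 C (trm C) A)) (DA C ?h)) (st C X A)"
    using p h X A DA_comp[of ?h "pr2 C (trm C) A"] by simp
  also have "\<dots> = comp C (DA C (pr2 C (trm C) A)) (comp C (DA C ?h) (st C X A))"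
    using h X A by simp
  also have "\<dots> = comp C (comp C (DA C (pr2 C (trm C) A)) (st C (trm C) A))
      (tup C (comp C (bang C X) (pr1 C X (DO C A))) (pr2 C X (DO C A)))"
    using n X A by simp
  also have "\<dots> = pr2 C X (DO C A)" using st_unit[OF A] X A by simp
  finally show ?thesis .
qed

text \<open>Strength along the diagonal of X: the instance of the associativity law that
  lets two nested letmaps share their context.\<close>

lemma st_diagonal:
  assumes X: "X \<in> Obj C" and A: "A \<in> Obj C" and T: "T \<in> Ar C" "dom C T = X" "cod C T = DO C A"
  shows "comp C (st C X (prd C X A)) (tup C (idm C X) (letmap_arr X A T (idm C (prd C X A))))
    = letmap_arr X A T (tup C (pr1 C X A) (idm C (prd C X A)))"
proof -
  let ?S = "comp C (st C X A) (tup C (idm C X) T)"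
  let ?d = "tup C (idm C X) (idm C X)"
  let ?a = "assoc C X X (DO C A)"
  let ?a' = "assoc C X X A"
  let ?pm = "prodmap C (idm C X) (st C X A)"
  have S: "letmap_arr X A T (idm C (prd C X A)) = ?S" using X A T by simp
  have a_ar: "?a \<in> Ar C" "dom C ?a = prd C (prd C X X) (DO C A)" "cod C ?a = prd C X (prd C X (DO C A))"
    and a'_ar: "?a' \<in> Ar C" "dom C ?a' = prd C (prd C X X) A" "cod C ?a' = prd C X (prd C X A)"
    using X A by (simp_all add: assoc_def)
  have pm: "?pm = tup C (pr1 C X (prd C X (DO C A))) (comp C (st C X A) (pr2 C X (prd C X (DO C A))))"
    using X A by (simp add: prodmap_eq)
  have pm_ar: "?pm \<in> Ar C" "dom C ?pm = prd C X (prd C X (DO C A))" "cod C ?pm = prd C X (DO C (prd C X A))"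
    using X A by (simp_all add: pm)
  have diag: "tup C (idm C X) ?S = comp C ?pm (comp C ?a (tup C ?d T))"
    using X A T by (simp add: pm assoc_def)
  have "comp C (st C (prd C X X) A) (tup C (comp C ?d (idm C X)) (comp C (DA C (idm C A)) T))
     = comp C (DA C (tup C (comp C ?d (pr1 C X A)) (comp C (idm C A) (pr2 C X A)))) ?S"
    using st_natural[of ?d "idm C A" "idm C X" T] X A T by simp
  then have st_d: "comp C (st C (prd C X X) A) (tup C ?d T)
     = comp C (DA C (tup C (comp C ?d (pr1 C X A)) (pr2 C X A))) ?S"
    using X A T by simp
  have a'_d: "comp C ?a' (tup C (comp C ?d (pr1 C X A)) (pr2 C X A))
      = tup C (pr1 C X A) (idm C (prd C X A))"
    using X A by (simp add: assoc_def)
  have "comp C (st C X (prd C X A)) (tup C (idm C X) ?S)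
      = comp C (comp C (st C X (prd C X A)) (comp C ?pm ?a)) (tup C ?d T)"
    using diag X A T a_ar pm_ar by simp
  also have "\<dots> = comp C (comp C (DA C ?a') (st C (prd C X X) A)) (tup C ?d T)"
    by (simp only: st_assoc[OF X X A])
  also have "\<dots> = comp C (DA C ?a') (comp C (st C (prd C X X) A) (tup C ?d T))"
    using X A T a'_ar by simp
  also have "\<dots> = comp C (DA C (comp C ?a' (tup C (comp C ?d (pr1 C X A)) (pr2 C X A)))) ?S"
    using st_d X A T a'_ar by (simp add: DA_comp_assoc)
  also have "\<dots> = comp C (DA C (tup C (pr1 C X A) (idm C (prd C X A)))) ?S"
    using a'_d by simp
  finally show ?thesis using S by simp
qed

lemma letmap_arr_assoc:
  assumes X: "X \<in> Obj C" and A: "A \<in> Obj C" and B: "B \<in> Obj C"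
    and T: "T \<in> Ar C" "dom C T = X" "cod C T = DO C A"
    and U: "U \<in> Ar C" "dom C U = prd C X A" "cod C U = B"
    and U': "U' \<in> Ar C" "dom C U' = prd C X B"
  shows "letmap_arr X B (letmap_arr X A T U) U' = letmap_arr X A T (comp C U' (tup C (pr1 C X A) U))"
proof -
  let ?S = "comp C (st C X A) (tup C (idm C X) T)"
  have S: "?S \<in> Ar C" "dom C ?S = X" "cod C ?S = DO C (prd C X A)" using X A T by simp_all
  let ?U = "tup C (comp C (idm C X) (pr1 C X (prd C X A))) (comp C U (pr2 C X (prd C X A)))"
  have "comp C (st C X B) (tup C (comp C (idm C X) (idm C X)) (comp C (DA C U) ?S))
     = comp C (DA C ?U) (comp C (st C X (prd C X A)) (tup C (idm C X) ?S))"
    using st_natural[of "idm C X" U "idm C X" ?S] X A B U S by simp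
  then have "comp C (st C X B) (tup C (idm C X) (comp C (DA C U) ?S))
     = comp C (DA C ?U) (comp C (DA C (tup C (pr1 C X A) (idm C (prd C X A)))) ?S)"
    using st_diagonal[OF X A T] X A T by simp
  moreover have "comp C ?U (tup C (pr1 C X A) (idm C (prd C X A))) = tup C (pr1 C X A) U"
    using X A U by simp
  ultimately show ?thesis
    using X A B U U' S by (simp add: DA_comp_assoc)
qed

lemma ev_cur_id: "f \<in> Ar C \<Longrightarrow> dom C f = prd C Z X \<Longrightarrow> cod C f = Y \<Longrightarrow> Z \<in> Obj C \<Longrightarrow> X \<in> Obj C \<Longrightarrow>
   k \<in> Ar C \<Longrightarrow> dom C k = Z \<Longrightarrow> cod C k = X \<Longrightarrow>
   comp C (ev C X Y) (tup C (cur C Z X Y f) k) = comp C f (tup C (idm C Z) k)"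
  using ev_cur[of f Z X Y "idm C Z" k] by simp

lemma ity_obj [simp]: "ity C b A \<in> Obj C"
  by (induction A) (simp_all add: base_obj)

lemma ictx_obj [simp]: "ictx C b \<Gamma> \<in> Obj C"
  by (induction \<Gamma>) simp_all

end

section \<open>Soundness\<close>

text \<open>The interpretation of a term relative to an environment, in which fs i : X \<rightarrow> [[\<Gamma> ! i]]
  interprets variable i. Unlike sem, this is natural in X (sem_env_comp) and turns
  substitution into an update of the environment (sem_env_subst).\<close>

definition env_ext :: "('o, 'm, 'z) sccc_scheme \<Rightarrow> 'o \<Rightarrow> 'o \<Rightarrow> (nat \<Rightarrow> 'm) \<Rightarrow> nat \<Rightarrow> 'm" where
  "env_ext C X A fs = (\<lambda>i. case i of 0 \<Rightarrow> pr2 C X A | Suc j \<Rightarrow> comp C (fs j) (pr1 C X A))"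

lemma env_ext_0 [simp]: "env_ext C X A fs 0 = pr2 C X A"
  and env_ext_Suc [simp]: "env_ext C X A fs (Suc j) = comp C (fs j) (pr1 C X A)"
  by (simp_all add: env_ext_def)

fun sem_env :: "('o, 'm, 'z) sccc_scheme \<Rightarrow> 'o \<Rightarrow> ty list \<Rightarrow> 'o \<Rightarrow> tm \<Rightarrow> (nat \<Rightarrow> 'm) \<Rightarrow> 'm" where
  "sem_env C b \<Gamma> X (Var i) fs = fs i"
| "sem_env C b \<Gamma> X Unit fs = bang C X"
| "sem_env C b \<Gamma> X (Pair t u) fs = tup C (sem_env C b \<Gamma> X t fs) (sem_env C b \<Gamma> X u fs)"
| "sem_env C b \<Gamma> X (Fst t) fs = (case tyof \<Gamma> t of
      Prod A B \<Rightarrow> comp C (pr1 C (ity C b A) (ity C b B)) (sem_env C b \<Gamma> X t fs) | _ \<Rightarrow> undefined)"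
| "sem_env C b \<Gamma> X (Snd t) fs = (case tyof \<Gamma> t of
      Prod A B \<Rightarrow> comp C (pr2 C (ity C b A) (ity C b B)) (sem_env C b \<Gamma> X t fs) | _ \<Rightarrow> undefined)"
| "sem_env C b \<Gamma> X (Lam A t) fs =
      cur C X (ity C b A) (ity C b (tyof (A # \<Gamma>) t))
        (sem_env C b (A # \<Gamma>) (prd C X (ity C b A)) t (env_ext C X (ity C b A) fs))"
| "sem_env C b \<Gamma> X (App t u) fs = (case tyof \<Gamma> t of
      Arr A B \<Rightarrow> comp C (ev C (ity C b A) (ity C b B)) (tup C (sem_env C b \<Gamma> X t fs) (sem_env C b \<Gamma> X u fs))
    | _ \<Rightarrow> undefined)"
| "sem_env C b \<Gamma> X (Letmap t u) fs = (case tyof \<Gamma> t of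
      Dia A \<Rightarrow> comp C (DA C (sem_env C b (A # \<Gamma>) (prd C X (ity C b A)) u (env_ext C X (ity C b A) fs)))
                 (comp C (st C X (ity C b A)) (tup C (idm C X) (sem_env C b \<Gamma> X t fs)))
    | _ \<Rightarrow> undefined)"

lemma sem_eq_sem_env: "sem C b \<Gamma> t = sem_env C b \<Gamma> (ictx C b \<Gamma>) t (ivar C b \<Gamma>)"
proof -
  have ext_ivar: "env_ext C (ictx C b \<Gamma>) (ity C b A) (ivar C b \<Gamma>) = ivar C b (A # \<Gamma>)" for \<Gamma> A
    by (rule ext) (simp add: env_ext_def split: nat.split)
  show ?thesis
    by (induction t arbitrary: \<Gamma>) (simp_all add: ext_ivar[symmetric] split: ty.split)
qed

lemma sem_env_cong:
  "typing \<Gamma> t A \<Longrightarrow> (\<And>i. i < length \<Gamma> \<Longrightarrow> fs i = gs i)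
   \<Longrightarrow> sem_env C b \<Gamma> X t fs = sem_env C b \<Gamma> X t gs"
proof (induction arbitrary: X fs gs rule: typing.induct)
  case (T_Pair \<Gamma> t A u B)
  show ?case
    using T_Pair.IH(1)[where fs=fs and gs=gs, OF T_Pair.prems]
      T_Pair.IH(2)[where fs=fs and gs=gs, OF T_Pair.prems] by simp
next
  case (T_Fst \<Gamma> t A B)
  show ?case using T_Fst.IH[where fs=fs and gs=gs, OF T_Fst.prems] tyof_typing[OF T_Fst(1)] by simp
next
  case (T_Snd \<Gamma> t A B)
  show ?case using T_Snd.IH[where fs=fs and gs=gs, OF T_Snd.prems] tyof_typing[OF T_Snd(1)] by simp
next
  case (T_App \<Gamma> t A B u)
  show ?case
    using T_App.IH(1)[where fs=fs and gs=gs, OF T_App.prems]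
      T_App.IH(2)[where fs=fs and gs=gs, OF T_App.prems] tyof_typing[OF T_App(1)] by simp
next
  case (T_Lam A \<Gamma> t B)
  let ?A = "ity C b A"
  have "\<And>i. i < length (A # \<Gamma>) \<Longrightarrow> env_ext C X ?A fs i = env_ext C X ?A gs i"
    using T_Lam.prems by (auto simp: env_ext_def split: nat.split)
  from T_Lam.IH[where fs="env_ext C X ?A fs" and gs="env_ext C X ?A gs", OF this]
  show ?case by simp
next
  case (T_Letmap \<Gamma> t A u B)
  let ?A = "ity C b A"
  have "\<And>i. i < length (A # \<Gamma>) \<Longrightarrow> env_ext C X ?A fs i = env_ext C X ?A gs i"
    using T_Letmap.prems by (auto simp: env_ext_def split: nat.split)
  from T_Letmap.IH(2)[where fs="env_ext C X ?A fs" and gs="env_ext C X ?A gs", OF this]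
  show ?case
    using T_Letmap.IH(1)[where fs=fs and gs=gs, OF T_Letmap.prems] tyof_typing[OF T_Letmap(1)] by simp
qed simp_all

lemma sem_env_lift: "typing \<Gamma> t A \<Longrightarrow> k \<le> length \<Gamma> \<Longrightarrow>
  sem_env C b (ctx_ins k B \<Gamma>) X (lift t k) fs = sem_env C b \<Gamma> X t (\<lambda>i. fs (if i < k then i else Suc i))"
proof (induction arbitrary: k X fs rule: typing.induct)
  have shift: "(\<lambda>i. env_ext C X A fs (if i < Suc k then i else Suc i))
      = env_ext C X A (\<lambda>i. fs (if i < k then i else Suc i))" for X A fs k
    by (rule ext) (simp add: env_ext_def split: nat.split)
  {
    case (T_Lam A \<Gamma> t B')
    then show ?case
      using T_Lam.IH[of "Suc k"] shift tyof_typing[OF typing_lift[OF T_Lam(1), of "Suc k" B]]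
        tyof_typing[OF T_Lam(1)] by simp
  next
    case (T_Letmap \<Gamma> t A u B')
    then show ?case
      using T_Letmap.IH(2)[of "Suc k"] shift tyof_typing[OF typing_lift[OF T_Letmap(1) T_Letmap(5)]]
        tyof_typing[OF T_Letmap(1)] by simp
  }
next
  case (T_Fst \<Gamma> t A B')
  then show ?case using tyof_typing[OF typing_lift[OF T_Fst(1) T_Fst(3)]] tyof_typing[OF T_Fst(1)] by simp
next
  case (T_Snd \<Gamma> t A B')
  then show ?case using tyof_typing[OF typing_lift[OF T_Snd(1) T_Snd(3)]] tyof_typing[OF T_Snd(1)] by simp
next
  case (T_App \<Gamma> t A B' u)
  then show ?case using tyof_typing[OF typing_lift[OF T_App(1) T_App(5)]] tyof_typing[OF T_App(1)] by simp
qed simp_all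

definition env_ins :: "nat \<Rightarrow> (nat \<Rightarrow> 'm) \<Rightarrow> 'm \<Rightarrow> nat \<Rightarrow> 'm" where
  "env_ins k fs m = (\<lambda>i. if i < k then fs i else if i = k then m else fs (i - 1))"

lemma env_ins_ext: "env_ins (Suc k) (env_ext C X A fs) (comp C m (pr1 C X A)) = env_ext C X A (env_ins k fs m)"
  by (rule ext) (auto simp: env_ins_def env_ext_def split: nat.split)

context model
begin

definition env_wf :: "'o \<Rightarrow> ty list \<Rightarrow> (nat \<Rightarrow> 'm) \<Rightarrow> bool" where
  "env_wf X \<Gamma> fs \<longleftrightarrow>
     (\<forall>i < length \<Gamma>. fs i \<in> Ar C \<and> dom C (fs i) = X \<and> cod C (fs i) = ity C b (\<Gamma> ! i))"

lemma env_wf_ext: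
  "env_wf X \<Gamma> fs \<Longrightarrow> X \<in> Obj C \<Longrightarrow> env_wf (prd C X (ity C b A)) (A # \<Gamma>) (env_ext C X (ity C b A) fs)"
  unfolding env_wf_def by (auto simp: env_ext_def split: nat.split)

lemma env_wf_ivar: "env_wf (ictx C b \<Gamma>) \<Gamma> (ivar C b \<Gamma>)"
proof (induction \<Gamma>)
  case (Cons A \<Gamma>)
  then show ?case by (auto simp: env_wf_def less_Suc_eq_0_disj)
qed (simp add: env_wf_def)

lemma sem_env_ar: "typing \<Gamma> t A \<Longrightarrow> X \<in> Obj C \<Longrightarrow> env_wf X \<Gamma> fs \<Longrightarrow>
   sem_env C b \<Gamma> X t fs \<in> Ar C \<and> dom C (sem_env C b \<Gamma> X t fs) = X
   \<and> cod C (sem_env C b \<Gamma> X t fs) = ity C b A"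
proof (induction arbitrary: X fs rule: typing.induct)
  case (T_Var i \<Gamma>)
  then show ?case by (simp add: env_wf_def)
next
  case (T_Lam A \<Gamma> t B)
  then show ?case using T_Lam.IH[OF _ env_wf_ext[OF T_Lam.prems(2,1)]] by (simp add: tyof_typing)
next
  case (T_Letmap \<Gamma> t A u B)
  then show ?case using T_Letmap.IH(2)[OF _ env_wf_ext[OF T_Letmap.prems(2,1)]]
    by (simp add: tyof_typing)
qed (simp_all add: tyof_typing)

lemma sem_env_env_ext_comp:
  assumes t: "typing (A # \<Gamma>) t B" and fs: "env_wf X \<Gamma> fs" and h: "h \<in> Ar C" "cod C h = X"
  shows "sem_env C b (A # \<Gamma>) Y t
      (\<lambda>i. comp C (env_ext C X (ity C b A) fs i)
             (tup C (comp C h (pr1 C (dom C h) (ity C b A))) (pr2 C (dom C h) (ity C b A))))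
    = sem_env C b (A # \<Gamma>) Y t (env_ext C (dom C h) (ity C b A) (\<lambda>i. comp C (fs i) h))"
proof (rule sem_env_cong[OF t])
  fix i assume "i < length (A # \<Gamma>)"
  with fs h show "comp C (env_ext C X (ity C b A) fs i)
        (tup C (comp C h (pr1 C (dom C h) (ity C b A))) (pr2 C (dom C h) (ity C b A)))
      = env_ext C (dom C h) (ity C b A) (\<lambda>i. comp C (fs i) h) i"
    by (cases i) (auto simp: env_wf_def)
qed

lemma sem_env_comp: "typing \<Gamma> t A \<Longrightarrow> X \<in> Obj C \<Longrightarrow> env_wf X \<Gamma> fs \<Longrightarrow> h \<in> Ar C \<Longrightarrow> cod C h = X \<Longrightarrow>
   comp C (sem_env C b \<Gamma> X t fs) h = sem_env C b \<Gamma> (dom C h) t (\<lambda>i. comp C (fs i) h)"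
proof (induction arbitrary: X fs h rule: typing.induct)
  case (T_Unit \<Gamma>)
  then show ?case using bang_uniq[of "comp C (bang C X) h"] by simp
next
  case (T_Pair \<Gamma> t A u B)
  then show ?case using sem_env_ar[OF T_Pair(1)] sem_env_ar[OF T_Pair(2)] by simp
next
  case (T_Fst \<Gamma> t A B)
  then show ?case using sem_env_ar[OF T_Fst(1)] by (simp add: tyof_typing)
next
  case (T_Snd \<Gamma> t A B)
  then show ?case using sem_env_ar[OF T_Snd(1)] by (simp add: tyof_typing)
next
  case (T_App \<Gamma> t A B u)
  then show ?case using sem_env_ar[OF T_App(1)] sem_env_ar[OF T_App(2)] by (simp add: tyof_typing)
next
  case (T_Lam A \<Gamma> t B)
  let ?A = "ity C b A" and ?W = "dom C h"
  let ?h' = "tup C (comp C h (pr1 C ?W ?A)) (pr2 C ?W ?A)"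
  have X: "X \<in> Obj C" using T_Lam.prems by auto
  have ext: "env_wf (prd C X ?A) (A # \<Gamma>) (env_ext C X ?A fs)" using env_wf_ext[OF T_Lam.prems(2,1)] .
  have "comp C (sem_env C b (A # \<Gamma>) (prd C X ?A) t (env_ext C X ?A fs)) ?h'
     = sem_env C b (A # \<Gamma>) (prd C ?W ?A) t (env_ext C ?W ?A (\<lambda>i. comp C (fs i) h))"
    using T_Lam.IH[OF _ ext] sem_env_env_ext_comp[OF T_Lam(1) T_Lam.prems(2-4)] X T_Lam.prems
    by simp
  then show ?case
    using sem_env_ar[OF T_Lam(1) _ ext] X T_Lam.prems by (simp add: tyof_typing[OF T_Lam(1)])
next
  case (T_Letmap \<Gamma> t A u B)
  let ?A = "ity C b A" and ?W = "dom C h"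
  let ?h' = "tup C (comp C h (pr1 C ?W ?A)) (pr2 C ?W ?A)"
  have X: "X \<in> Obj C" using T_Letmap.prems by auto
  have ext: "env_wf (prd C X ?A) (A # \<Gamma>) (env_ext C X ?A fs)" using env_wf_ext[OF T_Letmap.prems(2,1)] .
  let ?U = "sem_env C b (A # \<Gamma>) (prd C X ?A) u (env_ext C X ?A fs)"
  let ?T = "sem_env C b \<Gamma> X t fs"
  have "comp C ?U ?h' = sem_env C b (A # \<Gamma>) (prd C ?W ?A) u (env_ext C ?W ?A (\<lambda>i. comp C (fs i) h))"
    using T_Letmap.IH(2)[OF _ ext] sem_env_env_ext_comp[OF T_Letmap(2) T_Letmap.prems(2-4)] X T_Letmap.prems
    by simp
  moreover have "comp C (letmap_arr X ?A ?T ?U) h = letmap_arr ?W ?A (comp C ?T h) (comp C ?U ?h')"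
    using letmap_arr_comp[OF X ity_obj _ _ _ _ _ T_Letmap.prems(3,4)]
      sem_env_ar[OF T_Letmap(1) X T_Letmap.prems(2)] sem_env_ar[OF T_Letmap(2) _ ext] X
    by simp
  ultimately show ?case using T_Letmap.IH(1)[OF T_Letmap.prems] by (simp add: tyof_typing[OF T_Letmap(1)])
qed simp

lemma env_ins_env_ext:
  assumes s: "typing \<Gamma> s B" and X: "X \<in> Obj C" and fs: "env_wf X \<Gamma> fs"
  shows "env_ins (Suc k) (env_ext C X (ity C b A) fs)
      (sem_env C b (A # \<Gamma>) (prd C X (ity C b A)) (lift s 0) (env_ext C X (ity C b A) fs))
    = env_ext C X (ity C b A) (env_ins k fs (sem_env C b \<Gamma> X s fs))"
proof -
  have "sem_env C b (A # \<Gamma>) (prd C X (ity C b A)) (lift s 0) (env_ext C X (ity C b A) fs)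
      = comp C (sem_env C b \<Gamma> X s fs) (pr1 C X (ity C b A))"
    using sem_env_lift[OF s, of 0 C b A] sem_env_comp[OF s X fs, of "pr1 C X (ity C b A)"] X by simp
  then show ?thesis by (simp add: env_ins_ext)
qed

lemma sem_env_subst: "typing \<Delta> t A \<Longrightarrow> \<Delta> = ctx_ins k B \<Gamma> \<Longrightarrow> typing \<Gamma> s B \<Longrightarrow> k \<le> length \<Gamma> \<Longrightarrow>
   X \<in> Obj C \<Longrightarrow> env_wf X \<Gamma> fs \<Longrightarrow>
   sem_env C b \<Gamma> X (subst t k s) fs = sem_env C b \<Delta> X t (env_ins k fs (sem_env C b \<Gamma> X s fs))"
proof (induction arbitrary: \<Gamma> k s X fs rule: typing.induct)
  case (T_Var i \<Delta>)
  then show ?case by (simp add: env_ins_def)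
next
  case (T_Pair \<Delta> t A u B')
  then show ?case using T_Pair.IH(1)[OF T_Pair.prems] T_Pair.IH(2)[OF T_Pair.prems] by simp
next
  case (T_Fst \<Delta> t A B')
  then show ?case using T_Fst.IH[OF T_Fst.prems] tyof_typing[OF T_Fst(1)]
      tyof_typing[OF typing_subst[OF T_Fst(1) T_Fst.prems(1-3)]] by simp
next
  case (T_Snd \<Delta> t A B')
  then show ?case using T_Snd.IH[OF T_Snd.prems] tyof_typing[OF T_Snd(1)]
      tyof_typing[OF typing_subst[OF T_Snd(1) T_Snd.prems(1-3)]] by simp
next
  case (T_App \<Delta> t A B' u)
  then show ?case using T_App.IH(1)[OF T_App.prems] T_App.IH(2)[OF T_App.prems] tyof_typing[OF T_App(1)]
      tyof_typing[OF typing_subst[OF T_App(1) T_App.prems(1-3)]] by simp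
next
  case (T_Lam A \<Delta> t B')
  let ?A = "ity C b A"
  have s0: "typing (A # \<Gamma>) (lift s 0) B" using typing_lift0[OF T_Lam.prems(2)] .
  have "sem_env C b (A # \<Gamma>) (prd C X ?A) (subst t (Suc k) (lift s 0)) (env_ext C X ?A fs)
     = sem_env C b (A # \<Delta>) (prd C X ?A) t (env_ext C X ?A (env_ins k fs (sem_env C b \<Gamma> X s fs)))"
    using T_Lam.IH[where \<Gamma>="A # \<Gamma>" and k="Suc k" and s="lift s 0"] env_wf_ext[OF T_Lam.prems(5,4)]
      env_ins_env_ext[OF T_Lam.prems(2,4,5)] T_Lam.prems s0 by simp
  moreover have "tyof (A # \<Gamma>) (subst t (Suc k) (lift s 0)) = B'"
    using tyof_typing[OF typing_subst[OF T_Lam(1), of "Suc k" B "A # \<Gamma>"]] T_Lam.prems s0 by simp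
  ultimately show ?case using tyof_typing[OF T_Lam(1)] by simp
next
  case (T_Letmap \<Delta> t A u B')
  let ?A = "ity C b A"
  have s0: "typing (A # \<Gamma>) (lift s 0) B" using typing_lift0[OF T_Letmap.prems(2)] .
  have "sem_env C b (A # \<Gamma>) (prd C X ?A) (subst u (Suc k) (lift s 0)) (env_ext C X ?A fs)
     = sem_env C b (A # \<Delta>) (prd C X ?A) u (env_ext C X ?A (env_ins k fs (sem_env C b \<Gamma> X s fs)))"
    using T_Letmap.IH(2)[where \<Gamma>="A # \<Gamma>" and k="Suc k" and s="lift s 0"]
      env_wf_ext[OF T_Letmap.prems(5,4)] env_ins_env_ext[OF T_Letmap.prems(2,4,5)] T_Letmap.prems s0
    by simp
  moreover have "tyof \<Gamma> (subst t k s) = Dia A"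
    using tyof_typing[OF typing_subst[OF T_Letmap(1) T_Letmap.prems(1-3)]] .
  ultimately show ?case
    using tyof_typing[OF T_Letmap(1)] T_Letmap.IH(1)[OF T_Letmap.prems] by simp
qed simp

lemma sem_env_subst0:
  assumes "typing (B # \<Gamma>) t A" "typing \<Gamma> s B" "X \<in> Obj C" "env_wf X \<Gamma> fs"
  shows "sem_env C b \<Gamma> X (subst t 0 s) fs = sem_env C b (B # \<Gamma>) X t (env_ins 0 fs (sem_env C b \<Gamma> X s fs))"
  using sem_env_subst[OF assms(1), of 0 B \<Gamma>] assms(2-4) by simp

lemma sem_env_fun_eta:
  assumes t: "typing \<Gamma> t (Arr A B)" and X: "X \<in> Obj C" and fs: "env_wf X \<Gamma> fs"
  shows "sem_env C b \<Gamma> X (Lam A (App (lift t 0) (Var 0))) fs = sem_env C b \<Gamma> X t fs"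
proof -
  let ?A = "ity C b A" and ?B = "ity C b B" and ?m = "sem_env C b \<Gamma> X t fs"
  have m: "?m \<in> Ar C" "dom C ?m = X" "cod C ?m = ex C ?A ?B" using sem_env_ar[OF t X fs] by auto
  have "sem_env C b (A # \<Gamma>) (prd C X ?A) (lift t 0) (env_ext C X ?A fs) = comp C ?m (pr1 C X ?A)"
    using sem_env_lift[OF t, of 0 C b A] sem_env_comp[OF t X fs, of "pr1 C X ?A"] X by simp
  moreover have "?m = cur C X ?A ?B (comp C (ev C ?A ?B) (tup C (comp C ?m (pr1 C X ?A)) (pr2 C X ?A)))"
    by (rule cur_unique) (use m X in simp_all)
  ultimately show ?thesis using tyof_typing[OF typing_lift0[OF t]] by simp
qed

lemma sem_env_fun_beta:
  assumes t: "typing (A # \<Gamma>) t B" and u: "typing \<Gamma> u A" and X: "X \<in> Obj C" and fs: "env_wf X \<Gamma> fs"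
  shows "sem_env C b \<Gamma> X (App (Lam A t) u) fs = sem_env C b \<Gamma> X (subst t 0 u) fs"
proof -
  let ?A = "ity C b A"
  have ext: "env_wf (prd C X ?A) (A # \<Gamma>) (env_ext C X ?A fs)" using env_wf_ext[OF fs X] .
  let ?F = "sem_env C b (A # \<Gamma>) (prd C X ?A) t (env_ext C X ?A fs)" and ?N = "sem_env C b \<Gamma> X u fs"
  have F: "?F \<in> Ar C" "dom C ?F = prd C X ?A" "cod C ?F = ity C b B" using sem_env_ar[OF t _ ext] X by auto
  have N: "?N \<in> Ar C" "dom C ?N = X" "cod C ?N = ?A" using sem_env_ar[OF u X fs] by auto
  have "sem_env C b \<Gamma> X (App (Lam A t) u) fs = comp C ?F (tup C (idm C X) ?N)"
    using ev_cur_id[OF F X _ N] tyof_typing[OF t] X by simp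
  also have "\<dots> = sem_env C b (A # \<Gamma>) X t (\<lambda>i. comp C (env_ext C X ?A fs i) (tup C (idm C X) ?N))"
    using sem_env_comp[OF t _ ext, of "tup C (idm C X) ?N"] X N by simp
  also have "\<dots> = sem_env C b (A # \<Gamma>) X t (env_ins 0 fs ?N)"
  proof (rule sem_env_cong[OF t])
    fix i assume "i < length (A # \<Gamma>)"
    with fs X N show "comp C (env_ext C X ?A fs i) (tup C (idm C X) ?N) = env_ins 0 fs ?N i"
      by (cases i) (auto simp: env_ins_def env_wf_def)
  qed
  also have "\<dots> = sem_env C b \<Gamma> X (subst t 0 u) fs"
    using sem_env_subst0[OF t u X fs] by simp
  finally show ?thesis .
qed

lemma sem_env_letmap_eta:
  assumes t: "typing \<Gamma> t (Dia A)" and X: "X \<in> Obj C" and fs: "env_wf X \<Gamma> fs"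
  shows "sem_env C b \<Gamma> X (Letmap t (Var 0)) fs = sem_env C b \<Gamma> X t fs"
proof -
  let ?A = "ity C b A" and ?m = "sem_env C b \<Gamma> X t fs"
  have m: "?m \<in> Ar C" "dom C ?m = X" "cod C ?m = DO C ?A" using sem_env_ar[OF t X fs] by auto
  have "letmap_arr X ?A ?m (pr2 C X ?A)
      = comp C (comp C (DA C (pr2 C X ?A)) (st C X ?A)) (tup C (idm C X) ?m)"
    using X m by simp
  also have "\<dots> = ?m" using DA_pr2_st[OF X ity_obj] X m by simp
  finally show ?thesis using tyof_typing[OF t] by simp
qed

lemma sem_env_letmap_beta:
  assumes t: "typing \<Gamma> t (Dia A)" and u: "typing (A # \<Gamma>) u B" and u': "typing (B # \<Gamma>) u' D"
    and X: "X \<in> Obj C" and fs: "env_wf X \<Gamma> fs"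
  shows "sem_env C b \<Gamma> X (Letmap (Letmap t u) u') fs
    = sem_env C b \<Gamma> X (Letmap t (subst (lift u' 1) 0 u)) fs"
proof -
  let ?A = "ity C b A" and ?B = "ity C b B"
  have extA: "env_wf (prd C X ?A) (A # \<Gamma>) (env_ext C X ?A fs)"
    and extB: "env_wf (prd C X ?B) (B # \<Gamma>) (env_ext C X ?B fs)" using env_wf_ext[OF fs X] by auto
  let ?T = "sem_env C b \<Gamma> X t fs"
  let ?U = "sem_env C b (A # \<Gamma>) (prd C X ?A) u (env_ext C X ?A fs)"
  let ?U' = "sem_env C b (B # \<Gamma>) (prd C X ?B) u' (env_ext C X ?B fs)"
  have T: "?T \<in> Ar C" "dom C ?T = X" "cod C ?T = DO C ?A" using sem_env_ar[OF t X fs] by auto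
  have U: "?U \<in> Ar C" "dom C ?U = prd C X ?A" "cod C ?U = ?B" using sem_env_ar[OF u _ extA] X by auto
  have U': "?U' \<in> Ar C" "dom C ?U' = prd C X ?B" using sem_env_ar[OF u' _ extB] X by auto
  have lift_u': "typing (B # A # \<Gamma>) (lift u' 1) D" using typing_lift[OF u', of 1 A] by simp
  let ?h = "tup C (pr1 C X ?A) ?U"
  let ?env = "\<lambda>i. env_ins 0 (env_ext C X ?A fs) ?U (if i < 1 then i else Suc i)"
  have "sem_env C b (A # \<Gamma>) (prd C X ?A) (subst (lift u' 1) 0 u) (env_ext C X ?A fs)
     = sem_env C b (B # \<Gamma>) (prd C X ?A) u' ?env"
    using sem_env_subst0[OF lift_u' u _ extA] sem_env_lift[OF u', of 1 C b A] X by simp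
  also have "\<dots> = sem_env C b (B # \<Gamma>) (prd C X ?A) u' (\<lambda>i. comp C (env_ext C X ?B fs i) ?h)"
  proof (rule sem_env_cong[OF u'])
    fix i assume "i < length (B # \<Gamma>)"
    with fs X U show "?env i = comp C (env_ext C X ?B fs i) ?h"
      by (cases i) (auto simp: env_ins_def env_wf_def)
  qed
  also have "\<dots> = comp C ?U' ?h"
    using sem_env_comp[OF u' _ extB, of ?h] X U by simp
  finally have "sem_env C b (A # \<Gamma>) (prd C X ?A) (subst (lift u' 1) 0 u) (env_ext C X ?A fs)
      = comp C ?U' ?h" .
  moreover have "letmap_arr X ?B (letmap_arr X ?A ?T ?U) ?U' = letmap_arr X ?A ?T (comp C ?U' ?h)"
    by (rule letmap_arr_assoc[OF X ity_obj ity_obj T U U'])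
  ultimately show ?thesis
    using tyof_typing[OF typing.T_Letmap[OF t u]] tyof_typing[OF t] by simp
qed

lemma sem_env_sound:
  "eqv \<Gamma> t u A \<Longrightarrow> X \<in> Obj C \<Longrightarrow> env_wf X \<Gamma> fs \<Longrightarrow> sem_env C b \<Gamma> X t fs = sem_env C b \<Gamma> X u fs"
proof (induction arbitrary: X fs rule: eqv.induct)
  case (C_Fst \<Gamma> t t' A B)
  then show ?case using eqv_tyof[OF C_Fst(1)]
    by simp
next
  case (C_Snd \<Gamma> t t' A B)
  then show ?case using eqv_tyof[OF C_Snd(1)]
    by simp
next
  case (C_Lam A \<Gamma> t t' B)
  then show ?case using C_Lam.IH[OF _ env_wf_ext[OF C_Lam.prems(2,1)]] eqv_tyof[OF C_Lam(1)]
    by simp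
next
  case (C_App \<Gamma> t t' A B u u')
  then show ?case using eqv_tyof[OF C_App(1)]
    by simp
next
  case (C_Letmap \<Gamma> t t' A u u' B)
  then show ?case using C_Letmap.IH(2)[OF _ env_wf_ext[OF C_Letmap.prems(2,1)]] eqv_tyof[OF C_Letmap(1)]
    by simp
next
  case (unit_eta \<Gamma> t)
  then show ?case
    using sem_env_ar[OF unit_eta(1) unit_eta.prems] bang_uniq[of "sem_env C b \<Gamma> X t fs"] by simp
next
  case (pair_eta \<Gamma> t A B)
  then show ?case using sem_env_ar[OF pair_eta(1) pair_eta.prems] tyof_typing[OF pair_eta(1)] by simp
next
  case (fst_beta \<Gamma> t A u B)
  then show ?case using sem_env_ar[OF fst_beta(1) fst_beta.prems] sem_env_ar[OF fst_beta(2) fst_beta.prems]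
    tyof_typing[OF fst_beta(1)] tyof_typing[OF fst_beta(2)] by simp
next
  case (snd_beta \<Gamma> t A u B)
  then show ?case using sem_env_ar[OF snd_beta(1) snd_beta.prems] sem_env_ar[OF snd_beta(2) snd_beta.prems]
    tyof_typing[OF snd_beta(1)] tyof_typing[OF snd_beta(2)] by simp
next
  case (fun_eta \<Gamma> t A B)
  then show ?case using sem_env_fun_eta by simp
next
  case (fun_beta A \<Gamma> t B u)
  then show ?case using sem_env_fun_beta by simp
next
  case (letmap_eta \<Gamma> t A)
  then show ?case using sem_env_letmap_eta by simp
next
  case (letmap_beta \<Gamma> t A u B u' D)
  then show ?case using sem_env_letmap_beta by simp
qed simp_all

lemma sound: "eqv \<Gamma> t u A \<Longrightarrow> sem C b \<Gamma> t = sem C b \<Gamma> u"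
  using sem_env_sound[OF _ ictx_obj env_wf_ivar] by (simp add: sem_eq_sem_env)

end

lemma soundness: "eqv \<Gamma> t u A \<Longrightarrow> is_model C b \<Longrightarrow> sem C b \<Gamma> t = sem C b \<Gamma> u"
  by (rule model.sound) (rule model.intro)

section \<open>Completeness: the term model\<close>

text \<open>The syntactic category Syn: objects are types and arrows X \<rightarrow> Y are \<equiv>-classes of terms
  in the one-variable context [X].\<close>

instance ty :: countable by countable_datatype
instance tm :: countable by countable_datatype

definition obj :: "ty \<Rightarrow> nat" where
  "obj A = to_nat A"

definition obj_ty :: "nat \<Rightarrow> ty" where
  "obj_ty n = from_nat n"

definition canon :: "ty \<Rightarrow> ty \<Rightarrow> tm \<Rightarrow> tm" where
  "canon X Y t = (SOME s. eqv [X] t s Y)"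

definition arr :: "ty \<Rightarrow> ty \<Rightarrow> tm \<Rightarrow> nat" where
  "arr X Y t = to_nat (X, Y, canon X Y t)"

definition arr_dom :: "nat \<Rightarrow> nat" where
  "arr_dom f = obj (fst (from_nat f :: ty \<times> ty \<times> tm))"

definition arr_cod :: "nat \<Rightarrow> nat" where
  "arr_cod f = obj (fst (snd (from_nat f :: ty \<times> ty \<times> tm)))"

definition arr_tm :: "nat \<Rightarrow> tm" where
  "arr_tm f = snd (snd (from_nat f :: ty \<times> ty \<times> tm))"

definition Syn :: "(nat, nat) sccc" where
  "Syn = \<lparr> Obj = range obj, Ar = {arr X Y t | X Y t. typing [X] t Y}, dom = arr_dom, cod = arr_cod,
     comp = (\<lambda>g f. arr (obj_ty (arr_dom f)) (obj_ty (arr_cod g)) (subst (arr_tm g) 0 (arr_tm f))),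
     idm = (\<lambda>X. arr (obj_ty X) (obj_ty X) (Var 0)),
     trm = obj One,
     bang = (\<lambda>X. arr (obj_ty X) One Unit),
     prd = (\<lambda>X Y. obj (Prod (obj_ty X) (obj_ty Y))),
     pr1 = (\<lambda>X Y. arr (Prod (obj_ty X) (obj_ty Y)) (obj_ty X) (Fst (Var 0))),
     pr2 = (\<lambda>X Y. arr (Prod (obj_ty X) (obj_ty Y)) (obj_ty Y) (Snd (Var 0))),
     tup = (\<lambda>f g. arr (obj_ty (arr_dom f)) (Prod (obj_ty (arr_cod f)) (obj_ty (arr_cod g)))
        (Pair (arr_tm f) (arr_tm g))),
     ex = (\<lambda>X Y. obj (Arr (obj_ty X) (obj_ty Y))),
     ev = (\<lambda>X Y. arr (Prod (Arr (obj_ty X) (obj_ty Y)) (obj_ty X)) (obj_ty Y)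
        (App (Fst (Var 0)) (Snd (Var 0)))),
     cur = (\<lambda>Z X Y f. arr (obj_ty Z) (Arr (obj_ty X) (obj_ty Y))
        (Lam (obj_ty X) (subst (arr_tm f) 0 (Pair (Var 1) (Var 0))))),
     DO = (\<lambda>X. obj (Dia (obj_ty X))),
     DA = (\<lambda>f. arr (Dia (obj_ty (arr_dom f))) (Dia (obj_ty (arr_cod f))) (Letmap (Var 0) (arr_tm f))),
     st = (\<lambda>X Y. arr (Prod (obj_ty X) (Dia (obj_ty Y))) (Dia (Prod (obj_ty X) (obj_ty Y)))
        (Letmap (Snd (Var 0)) (Pair (Fst (Var 1)) (Var 0)))) \<rparr>"

lemma obj_ty_obj [simp]: "obj_ty (obj A) = A"
  by (simp add: obj_ty_def obj_def)

lemma obj_eq_iff [simp]: "obj A = obj B \<longleftrightarrow> A = B"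
  by (metis obj_ty_obj)

lemma eqv_canon: "typing [X] t Y \<Longrightarrow> eqv [X] t (canon X Y t) Y"
  unfolding canon_def by (rule someI_ex) (blast intro: eqv.E_refl)

lemma canon_cong: "eqv [X] t s Y \<Longrightarrow> canon X Y t = canon X Y s"
proof -
  assume "eqv [X] t s Y"
  then have "(\<lambda>r. eqv [X] t r Y) = (\<lambda>r. eqv [X] s r Y)"
    by (auto intro: eqv.E_trans eqv.E_sym)
  then show ?thesis unfolding canon_def by simp
qed

lemma arr_dom_arr [simp]: "arr_dom (arr X Y t) = obj X"
  and arr_cod_arr [simp]: "arr_cod (arr X Y t) = obj Y"
  and arr_tm_arr [simp]: "arr_tm (arr X Y t) = canon X Y t"
  by (simp_all add: arr_dom_def arr_cod_def arr_tm_def arr_def)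

lemma arr_eq_iff: "typing [X] t Y \<Longrightarrow> typing [X] s Y \<Longrightarrow> arr X Y t = arr X Y s \<longleftrightarrow> eqv [X] t s Y"
proof
  assume t: "typing [X] t Y" and s: "typing [X] s Y" and "arr X Y t = arr X Y s"
  then have "canon X Y t = canon X Y s" unfolding arr_def by simp
  then show "eqv [X] t s Y" using eqv_canon[OF t] eqv_canon[OF s] by (metis eqv.E_sym eqv.E_trans)
next
  show "eqv [X] t s Y \<Longrightarrow> arr X Y t = arr X Y s" unfolding arr_def using canon_cong by simp
qed

lemma arr_eqI: "eqv [X] t s Y \<Longrightarrow> arr X Y t = arr X Y s"
  unfolding arr_def using canon_cong by simp

lemma eqv_canon_append: "typing [X] t Y \<Longrightarrow> eqv (X # \<Delta>) (canon X Y t) t Y"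
  using eqv_append[OF eqv.E_sym[OF eqv_canon], of X t Y \<Delta>] by simp

lemma Obj_Syn [simp]: "Obj Syn = range obj"
  and Ar_Syn: "Ar Syn = {arr X Y t | X Y t. typing [X] t Y}"
  and dom_Syn [simp]: "dom Syn = arr_dom"
  and cod_Syn [simp]: "cod Syn = arr_cod"
  and trm_Syn [simp]: "trm Syn = obj One"
  and idm_Syn [simp]: "idm Syn (obj A) = arr A A (Var 0)"
  and bang_Syn [simp]: "bang Syn (obj A) = arr A One Unit"
  and prd_Syn [simp]: "prd Syn (obj A) (obj B) = obj (Prod A B)"
  and pr1_Syn [simp]: "pr1 Syn (obj A) (obj B) = arr (Prod A B) A (Fst (Var 0))"
  and pr2_Syn [simp]: "pr2 Syn (obj A) (obj B) = arr (Prod A B) B (Snd (Var 0))"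
  and ex_Syn [simp]: "ex Syn (obj A) (obj B) = obj (Arr A B)"
  and ev_Syn [simp]: "ev Syn (obj A) (obj B) = arr (Prod (Arr A B) A) B (App (Fst (Var 0)) (Snd (Var 0)))"
  and DO_Syn [simp]: "DO Syn (obj A) = obj (Dia A)"
  and st_Syn [simp]: "st Syn (obj A) (obj B)
    = arr (Prod A (Dia B)) (Dia (Prod A B)) (Letmap (Snd (Var 0)) (Pair (Fst (Var 1)) (Var 0)))"
  by (simp_all add: Syn_def)

lemma comp_arr [simp]:
  "typing [X] f Y \<Longrightarrow> typing [Y] g Z \<Longrightarrow> comp Syn (arr Y Z g) (arr X Y f) = arr X Z (subst g 0 f)"
  using eqv_subst0[OF eqv_canon_append[of Y g Z "[X]"] eqv.E_sym[OF eqv_canon[of X f Y]]]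
  by (simp add: Syn_def arr_eqI)

lemma tup_arr [simp]:
  "typing [X] f A \<Longrightarrow> typing [X] g B \<Longrightarrow> tup Syn (arr X A f) (arr X B g) = arr X (Prod A B) (Pair f g)"
  by (simp add: Syn_def arr_eqI eqv.C_Pair eqv.E_sym eqv_canon)

lemma cur_arr [simp]: "typing [Prod Z X] f Y \<Longrightarrow> cur Syn (obj Z) (obj X) (obj Y) (arr (Prod Z X) Y f)
    = arr Z (Arr X Y) (Lam X (subst f 0 (Pair (Var 1) (Var 0))))"
proof -
  assume f: "typing [Prod Z X] f Y"
  have "eqv [X, Z] (Pair (Var 1) (Var 0)) (Pair (Var 1) (Var 0)) (Prod Z X)"
    by (rule eqv.E_refl) (simp add: typing_iff)
  with f have "eqv [Z] (Lam X (subst (canon (Prod Z X) Y f) 0 (Pair (Var 1) (Var 0))))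
      (Lam X (subst f 0 (Pair (Var 1) (Var 0)))) (Arr X Y)"
    by (intro eqv.C_Lam eqv_subst0) (simp_all add: eqv_canon_append)
  then show ?thesis by (simp add: Syn_def arr_eqI)
qed

lemma DA_arr [simp]: "typing [X] f Y \<Longrightarrow> DA Syn (arr X Y f) = arr (Dia X) (Dia Y) (Letmap (Var 0) f)"
proof -
  assume "typing [X] f Y"
  moreover have "eqv [Dia X] (Var 0) (Var 0) (Dia X)" by (rule eqv.E_refl) (simp add: typing_iff)
  ultimately show ?thesis
    by (simp add: Syn_def arr_eqI eqv.C_Letmap eqv_canon_append)
qed

lemma arr_in_Ar [simp]: "typing [X] t Y \<Longrightarrow> arr X Y t \<in> Ar Syn"
  by (auto simp: Ar_Syn)

lemma Ar_SynE: "f \<in> Ar Syn \<Longrightarrow> (\<And>X Y t. typing [X] t Y \<Longrightarrow> f = arr X Y t \<Longrightarrow> P) \<Longrightarrow> P"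
  by (auto simp: Ar_Syn)

lemma hom_Syn: "hom Syn (obj A) (obj B) = {arr A B t | t. typing [A] t B}"
  by (auto simp: hom_def Ar_Syn)

lemma arr_in_hom [simp]: "check [A] t = Some B \<Longrightarrow> arr A B t \<in> hom Syn (obj A) (obj B)"
  by (auto simp: hom_Syn typing_iff)

text \<open>What the simplifier needs to know about a term in one variable to compute with it.\<close>

lemma arr_term_facts: "typing [X] f Y \<Longrightarrow> (\<forall>\<Delta>. check (X # \<Delta>) f = Some Y) \<and> scoped 1 f \<and>
  (\<forall>\<Delta> s. check \<Delta> s = Some X \<longrightarrow> check \<Delta> (subst f 0 s) = Some Y)"
  using typing_append[of "[X]" f Y] typing_scoped[of "[X]" f Y] typing_subst0[of X _ f Y]
  by (fastforce simp: typing_iff)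

text \<open>The relation eqv with the type moved in front of the two terms, so that chains of
  equivalences can be written with also/finally; its rules are stated with check so that
  their typing side conditions are discharged by the simplifier.\<close>

definition eq_in :: "ty list \<Rightarrow> ty \<Rightarrow> tm \<Rightarrow> tm \<Rightarrow> bool" where
  "eq_in \<Gamma> A t u \<longleftrightarrow> eqv \<Gamma> t u A"

lemma eq_in_trans [trans]: "eq_in \<Gamma> A t u \<Longrightarrow> eq_in \<Gamma> A u v \<Longrightarrow> eq_in \<Gamma> A t v"
  unfolding eq_in_def by (rule eqv.E_trans)

lemma eq_in_eq_trans [trans]: "eq_in \<Gamma> A t u \<Longrightarrow> u = v \<Longrightarrow> eq_in \<Gamma> A t v"
  and eq_eq_in_trans [trans]: "t = u \<Longrightarrow> eq_in \<Gamma> A u v \<Longrightarrow> eq_in \<Gamma> A t v"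
  by simp_all

lemma arr_eq_in: "eq_in [X] Y t s \<Longrightarrow> arr X Y t = arr X Y s"
  unfolding eq_in_def by (rule arr_eqI)

lemma eq_in_refl: "check \<Gamma> t = Some A \<Longrightarrow> eq_in \<Gamma> A t t"
  and eq_in_sym: "eq_in \<Gamma> A t u \<Longrightarrow> eq_in \<Gamma> A u t"
  and eq_in_pair: "eq_in \<Gamma> A t t' \<Longrightarrow> eq_in \<Gamma> B u u' \<Longrightarrow> eq_in \<Gamma> (Prod A B) (Pair t u) (Pair t' u')"
  and eq_in_lam: "eq_in (A # \<Gamma>) B t t' \<Longrightarrow> eq_in \<Gamma> (Arr A B) (Lam A t) (Lam A t')"
  and eq_in_app: "eq_in \<Gamma> (Arr A B) t t' \<Longrightarrow> eq_in \<Gamma> A u u' \<Longrightarrow> eq_in \<Gamma> B (App t u) (App t' u')"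
  and eq_in_letmap: "eq_in \<Gamma> (Dia A) t t' \<Longrightarrow> eq_in (A # \<Gamma>) B u u'
    \<Longrightarrow> eq_in \<Gamma> (Dia B) (Letmap t u) (Letmap t' u')"
  and eq_in_pair_eta: "check \<Gamma> t = Some (Prod A B) \<Longrightarrow> eq_in \<Gamma> (Prod A B) t (Pair (Fst t) (Snd t))"
  and eq_in_fst_beta: "check \<Gamma> t = Some A \<Longrightarrow> check \<Gamma> u = Some B \<Longrightarrow> eq_in \<Gamma> A (Fst (Pair t u)) t"
  and eq_in_snd_beta: "check \<Gamma> t = Some A \<Longrightarrow> check \<Gamma> u = Some B \<Longrightarrow> eq_in \<Gamma> B (Snd (Pair t u)) u"
  and eq_in_fun_eta: "check \<Gamma> t = Some (Arr A B) \<Longrightarrow> eq_in \<Gamma> (Arr A B) t (Lam A (App (lift t 0) (Var 0)))"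
  and eq_in_fun_beta: "check (A # \<Gamma>) t = Some B \<Longrightarrow> check \<Gamma> u = Some A
    \<Longrightarrow> eq_in \<Gamma> B (App (Lam A t) u) (subst t 0 u)"
  and eq_in_letmap_eta: "check \<Gamma> t = Some (Dia A) \<Longrightarrow> eq_in \<Gamma> (Dia A) t (Letmap t (Var 0))"
  and eq_in_subst0: "eq_in (B # \<Gamma>) A t u \<Longrightarrow> eq_in \<Gamma> B s s' \<Longrightarrow> eq_in \<Gamma> A (subst t 0 s) (subst u 0 s')"
  unfolding eq_in_def
  by (auto simp: typing_iff[symmetric] intro: eqv.intros eqv_subst0)

lemma eq_in_letmap_beta: "check \<Gamma> t = Some (Dia A) \<Longrightarrow> check (A # \<Gamma>) u = Some B \<Longrightarrow> check (B # \<Gamma>) u' = Some C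
  \<Longrightarrow> eq_in \<Gamma> (Dia C) (Letmap (Letmap t u) u') (Letmap t (subst (lift u' 1) 0 u))"
  unfolding eq_in_def by (rule eqv.letmap_beta) (simp_all add: typing_iff)

lemma eq_in_subst_arg: "check [B] t = Some A \<Longrightarrow> eq_in \<Gamma> B s s' \<Longrightarrow> eq_in \<Gamma> A (subst t 0 s) (subst t 0 s')"
  using eq_in_subst0 eq_in_refl arr_term_facts[of B t A] by (metis typing_iff)

lemma is_category_Syn: "is_category Syn"
  unfolding is_category_def
proof (intro conjI ballI impI)
  fix f assume "f \<in> Ar Syn"
  then obtain X Y a where a: "typing [X] a Y" "f = arr X Y a" by (rule Ar_SynE)
  note fa = arr_term_facts[OF a(1)]
  show "dom Syn f \<in> Obj Syn" "cod Syn f \<in> Obj Syn" using a by simp_all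
  show "comp Syn (idm Syn (cod Syn f)) f = f" "comp Syn f (idm Syn (dom Syn f)) = f"
    using a fa by (simp_all add: typing_iff)
  fix g assume "g \<in> Ar Syn" and fg: "cod Syn f = dom Syn g"
  then obtain Z c where c: "typing [Y] c Z" "g = arr Y Z c" using a by (auto elim: Ar_SynE)
  note fc = arr_term_facts[OF c(1)]
  show "comp Syn g f \<in> hom Syn (dom Syn f) (cod Syn g)" using a c fa fc by (simp add: typing_iff)
  fix h assume "h \<in> Ar Syn" and gh: "cod Syn g = dom Syn h"
  then obtain W d where d: "typing [Z] d W" "h = arr Z W d" using c by (auto elim: Ar_SynE)
  show "comp Syn h (comp Syn g f) = comp Syn (comp Syn h g) f"
    using a c d fa fc arr_term_facts[OF d(1)] by (simp add: typing_iff)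
next
  fix X assume "X \<in> Obj Syn"
  then show "idm Syn X \<in> hom Syn X X" by (auto simp: typing_iff)
qed

lemma is_terminal_Syn: "is_terminal Syn"
  unfolding is_terminal_def
proof (intro conjI ballI)
  fix X assume "X \<in> Obj Syn"
  then obtain A where A: "X = obj A" by auto
  then show "bang Syn X \<in> hom Syn X (trm Syn)" by simp
  fix f assume "f \<in> hom Syn X (trm Syn)"
  then obtain t where "typing [A] t One" "f = arr A One t" using A by (auto simp: hom_Syn)
  then show "f = bang Syn X" using A arr_eqI[OF eqv.unit_eta] by simp
qed simp

lemma tup_unique_Syn:
  assumes d: "typing [W] d (Prod A B)" and a: "typing [W] a A" and c: "typing [W] c B"
    and "comp Syn (pr1 Syn (obj A) (obj B)) (arr W (Prod A B) d) = arr W A a"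
    and "comp Syn (pr2 Syn (obj A) (obj B)) (arr W (Prod A B) d) = arr W B c"
  shows "arr W (Prod A B) d = tup Syn (arr W A a) (arr W B c)"
proof -
  note fd = arr_term_facts[OF d]
  have "eq_in [W] A (Fst d) a" and "eq_in [W] B (Snd d) c"
    using assms arr_eq_iff[of W "Fst d" A a] arr_eq_iff[of W "Snd d" B c] fd
    unfolding eq_in_def by (simp_all add: typing_iff)
  then have "eq_in [W] (Prod A B) (Pair (Fst d) (Snd d)) (Pair a c)" by (rule eq_in_pair)
  with eq_in_pair_eta have "eq_in [W] (Prod A B) d (Pair a c)"
    using fd eq_in_trans by blast
  then show ?thesis using a c by (simp add: arr_eq_in)
qed

lemma has_products_Syn: "has_products Syn"
  unfolding has_products_def
proof (intro conjI ballI impI)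
  fix X Y assume "X \<in> Obj Syn" "Y \<in> Obj Syn"
  then obtain A B where AB: "X = obj A" "Y = obj B" by auto
  then show "prd Syn X Y \<in> Obj Syn" "pr1 Syn X Y \<in> hom Syn (prd Syn X Y) X"
    "pr2 Syn X Y \<in> hom Syn (prd Syn X Y) Y" by simp_all
  fix Z f g assume "Z \<in> Obj Syn" "f \<in> hom Syn Z X" "g \<in> hom Syn Z Y"
  then obtain W a c where W: "Z = obj W" and a: "typing [W] a A" "f = arr W A a"
    and c: "typing [W] c B" "g = arr W B c" using AB by (auto simp: hom_Syn)
  note fa = arr_term_facts[OF a(1)] and fc = arr_term_facts[OF c(1)]
  show "tup Syn f g \<in> hom Syn Z (prd Syn X Y)" using a c AB W fa fc by (simp add: typing_iff)
  show "comp Syn (pr1 Syn X Y) (tup Syn f g) = f" "comp Syn (pr2 Syn X Y) (tup Syn f g) = g"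
    using a c AB W fa fc by (simp_all add: typing_iff arr_eq_in eq_in_fst_beta eq_in_snd_beta)
  fix h assume "h \<in> hom Syn Z (prd Syn X Y)"
    and "comp Syn (pr1 Syn X Y) h = f \<and> comp Syn (pr2 Syn X Y) h = g"
  then show "h = tup Syn f g" using tup_unique_Syn a c AB W by (auto simp: hom_Syn)
qed

lemma ev_prodmap_Syn:
  assumes d: "typing [W] d (Arr A B)"
  shows "comp Syn (ev Syn (obj A) (obj B)) (prodmap Syn (arr W (Arr A B) d) (idm Syn (obj A)))
    = arr (Prod W A) B (App (Fst (Pair (subst d 0 (Fst (Var 0))) (Snd (Var 0))))
        (Snd (Pair (subst d 0 (Fst (Var 0))) (Snd (Var 0)))))"
  using arr_term_facts[OF d] d by (simp add: typing_iff prodmap_def)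

lemma ev_cur_Syn:
  assumes a: "typing [Prod W A] a B"
  shows "comp Syn (ev Syn (obj A) (obj B))
      (prodmap Syn (cur Syn (obj W) (obj A) (obj B) (arr (Prod W A) B a)) (idm Syn (obj A)))
    = arr (Prod W A) B a"
proof -
  note fa = arr_term_facts[OF a]
  let ?L = "Lam A (subst a 0 (Pair (Var 1) (Var 0)))"
  let ?L' = "Lam A (subst a 0 (Pair (Fst (Var 1)) (Var 0)))"
  have "eq_in [Prod W A] B (App (Fst (Pair ?L' (Snd (Var 0)))) (Snd (Pair ?L' (Snd (Var 0)))))
      (App ?L' (Snd (Var 0)))"
    by (rule eq_in_app[OF eq_in_fst_beta eq_in_snd_beta]) (use fa in simp_all)
  also have "eq_in [Prod W A] B \<dots> (subst (subst a 0 (Pair (Fst (Var 1)) (Var 0))) 0 (Snd (Var 0)))"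
    by (rule eq_in_fun_beta) (use fa in simp_all)
  also have "\<dots> = subst a 0 (Pair (Fst (Var 0)) (Snd (Var 0)))"
    using fa by simp
  also have "eq_in [Prod W A] B \<dots> (subst a 0 (Var 0))"
    by (rule eq_in_subst_arg[OF _ eq_in_sym[OF eq_in_pair_eta]]) (use fa in simp_all)
  also have "\<dots> = a" using fa by simp
  finally show ?thesis
    using ev_prodmap_Syn[of W ?L A B] a fa by (simp add: typing_iff arr_eq_in)
qed

lemma cur_unique_Syn:
  assumes a: "typing [Prod W A] a B" and d: "typing [W] d (Arr A B)"
    and e: "comp Syn (ev Syn (obj A) (obj B)) (prodmap Syn (arr W (Arr A B) d) (idm Syn (obj A)))
      = arr (Prod W A) B a"
  shows "arr W (Arr A B) d = cur Syn (obj W) (obj A) (obj B) (arr (Prod W A) B a)"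
proof -
  note fa = arr_term_facts[OF a] and fd = arr_term_facts[OF d]
  let ?D = "subst d 0 (Fst (Var 0))"
  let ?E = "App (Fst (Pair ?D (Snd (Var 0)))) (Snd (Pair ?D (Snd (Var 0))))"
  let ?P = "Pair (Var 1) (Var 0)"
  let ?D' = "subst d 0 (Fst ?P)"
  have "typing [Prod W A] ?E B" using fd by (simp add: typing_iff)
  moreover have "arr (Prod W A) B ?E = arr (Prod W A) B a" using e ev_prodmap_Syn[OF d] by simp
  ultimately have E: "eq_in [Prod W A] B ?E a" using arr_eq_iff a unfolding eq_in_def by blast
  have "eq_in [W] (Arr A B) d (Lam A (App (lift d 0) (Var 0)))" using fd by (simp add: eq_in_fun_eta)
  also have "eq_in [W] (Arr A B) \<dots> (Lam A (App ?D' (Snd ?P)))"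
  proof (rule eq_in_lam[OF eq_in_app])
    have "eq_in [A, W] (Arr A B) ?D' (subst d 0 (Var 1))"
      by (rule eq_in_subst_arg[OF _ eq_in_fst_beta]) (use fd in simp_all)
    then show "eq_in [A, W] (Arr A B) (lift d 0) ?D'" using fd by (simp add: eq_in_sym)
    show "eq_in [A, W] A (Var 0) (Snd ?P)" by (rule eq_in_sym[OF eq_in_snd_beta]) simp_all
  qed
  also have "eq_in [W] (Arr A B) \<dots> (Lam A (subst ?E 0 ?P))"
  proof -
    have "eq_in [A, W] B (App (Fst (Pair ?D' (Snd ?P))) (Snd (Pair ?D' (Snd ?P)))) (App ?D' (Snd ?P))"
      by (rule eq_in_app[OF eq_in_fst_beta eq_in_snd_beta]) (use fd in simp_all)
    then show ?thesis using fd by (simp add: eq_in_lam eq_in_sym)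
  qed
  also have "eq_in [W] (Arr A B) \<dots> (Lam A (subst a 0 ?P))"
    using E eqv_append[of "[Prod W A]" ?E a B "[A, W]"]
    by (intro eq_in_lam eq_in_subst0 eq_in_refl) (simp_all add: eq_in_def)
  finally show ?thesis using a by (simp add: arr_eq_in)
qed

lemma has_exponentials_Syn: "has_exponentials Syn"
  unfolding has_exponentials_def
proof (intro conjI ballI impI)
  fix X Y assume "X \<in> Obj Syn" "Y \<in> Obj Syn"
  then obtain A B where AB: "X = obj A" "Y = obj B" by auto
  then show "ex Syn X Y \<in> Obj Syn" "ev Syn X Y \<in> hom Syn (prd Syn (ex Syn X Y) X) Y"
    by (simp_all add: typing_iff)
  fix Z f assume "Z \<in> Obj Syn" "f \<in> hom Syn (prd Syn Z X) Y"
  then obtain W a where W: "Z = obj W" and a: "typing [Prod W A] a B" "f = arr (Prod W A) B a"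
    using AB by (auto simp: hom_Syn)
  show "cur Syn Z X Y f \<in> hom Syn Z (ex Syn X Y)"
    using a AB W arr_term_facts[OF a(1)] by (simp add: typing_iff)
  show "comp Syn (ev Syn X Y) (prodmap Syn (cur Syn Z X Y f) (idm Syn X)) = f"
    using ev_cur_Syn[OF a(1)] a AB W by simp
  fix h assume "h \<in> hom Syn Z (ex Syn X Y)" "comp Syn (ev Syn X Y) (prodmap Syn h (idm Syn X)) = f"
  then show "h = cur Syn Z X Y f" using cur_unique_Syn[OF a(1)] a AB W by (auto simp: hom_Syn)
qed

lemma is_endofunctor_Syn: "is_endofunctor Syn"
  unfolding is_endofunctor_def
proof (intro conjI ballI impI)
  fix X assume "X \<in> Obj Syn"
  then obtain A where A: "X = obj A" by auto
  have "eq_in [Dia A] (Dia A) (Letmap (Var 0) (Var 0)) (Var 0)"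
    by (rule eq_in_sym[OF eq_in_letmap_eta]) simp
  then show "DO Syn X \<in> Obj Syn" "DA Syn (idm Syn X) = idm Syn (DO Syn X)"
    using A by (simp_all add: typing_iff arr_eq_in)
next
  fix f assume "f \<in> Ar Syn"
  then obtain X Y a where a: "typing [X] a Y" "f = arr X Y a" by (rule Ar_SynE)
  note fa = arr_term_facts[OF a(1)]
  show "DA Syn f \<in> hom Syn (DO Syn (dom Syn f)) (DO Syn (cod Syn f))" using a fa by (simp add: typing_iff)
  fix g assume "g \<in> Ar Syn" "cod Syn f = dom Syn g"
  then obtain Z c where c: "typing [Y] c Z" "g = arr Y Z c" using a by (auto elim: Ar_SynE)
  note fc = arr_term_facts[OF c(1)]
  have "eq_in [Dia X] (Dia Z) (Letmap (Letmap (Var 0) a) c) (Letmap (Var 0) (subst (lift c 1) 0 a))"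
    by (rule eq_in_letmap_beta[where A=X and B=Y]) (use fa fc in simp_all)
  then show "DA Syn (comp Syn g f) = comp Syn (DA Syn g) (DA Syn f)"
    using a c fa fc by (simp add: typing_iff arr_eq_in eq_in_sym)
qed

text \<open>Contraction of projections of pairs. Two arrows of Syn are equal as soon as their
  terms have the same contraction up to \<equiv>, which decides the unit and associativity laws
  of the strength.\<close>

fun reduce :: "tm \<Rightarrow> tm" where
  "reduce (Var i) = Var i"
| "reduce Unit = Unit"
| "reduce (Pair t u) = Pair (reduce t) (reduce u)"
| "reduce (Fst t) = (case reduce t of Pair a b \<Rightarrow> a | t' \<Rightarrow> Fst t')"
| "reduce (Snd t) = (case reduce t of Pair a b \<Rightarrow> b | t' \<Rightarrow> Snd t')"
| "reduce (Lam A t) = Lam A (reduce t)"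
| "reduce (App t u) = App (reduce t) (reduce u)"
| "reduce (Letmap t u) = Letmap (reduce t) (reduce u)"

lemma eqv_reduce: "typing \<Gamma> t A \<Longrightarrow> eqv \<Gamma> t (reduce t) A"
proof (induction rule: typing.induct)
  case (T_Fst \<Gamma> t A B)
  show ?case
  proof (cases "reduce t")
    case (Pair a c)
    then have a: "typing \<Gamma> a A" and c: "typing \<Gamma> c B"
      using eqv_typing2[OF T_Fst.IH] by (auto simp: typing_iff split: option.splits)
    have "eqv \<Gamma> (Fst t) (Fst (Pair a c)) A" using eqv.C_Fst[OF T_Fst.IH] Pair by simp
    then show ?thesis using eqv.E_trans[OF _ eqv.fst_beta[OF a c]] Pair by simp
  qed (use eqv.C_Fst[OF T_Fst.IH] in simp_all)
next
  case (T_Snd \<Gamma> t A B)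
  show ?case
  proof (cases "reduce t")
    case (Pair a c)
    then have a: "typing \<Gamma> a A" and c: "typing \<Gamma> c B"
      using eqv_typing2[OF T_Snd.IH] by (auto simp: typing_iff split: option.splits)
    have "eqv \<Gamma> (Snd t) (Snd (Pair a c)) B" using eqv.C_Snd[OF T_Snd.IH] Pair by simp
    then show ?thesis using eqv.E_trans[OF _ eqv.snd_beta[OF a c]] Pair by simp
  qed (use eqv.C_Snd[OF T_Snd.IH] in simp_all)
qed (auto intro: eqv.intros typing.intros)

lemma eq_in_reduce: "check \<Gamma> t = Some A \<Longrightarrow> eq_in \<Gamma> A t (reduce t)"
  unfolding eq_in_def by (rule eqv_reduce) (simp add: typing_iff)

lemma arr_eq_by_reduce:
  assumes "check [X] t = Some Y" "check [X] s = Some Y" "eq_in [X] Y (reduce t) (reduce s)"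
  shows "arr X Y t = arr X Y s"
  using assms eq_in_reduce eq_in_sym eq_in_trans arr_eq_in by metis

lemma eq_in_meet: "eq_in \<Gamma> A t v \<Longrightarrow> eq_in \<Gamma> A u v' \<Longrightarrow> v = v' \<Longrightarrow> eq_in \<Gamma> A t u"
  using eq_in_trans eq_in_sym by metis

lemma eq_in_letmap_beta_reduce:
  assumes "check \<Gamma> t = Some (Dia A)" "check (A # \<Gamma>) u = Some B" "check (B # \<Gamma>) u' = Some C"
  shows "eq_in \<Gamma> (Dia C) (Letmap (Letmap t u) u') (reduce (Letmap t (subst (lift u' 1) 0 u)))"
proof -
  have beta: "eq_in \<Gamma> (Dia C) (Letmap (Letmap t u) u') (Letmap t (subst (lift u' 1) 0 u))"
    using eq_in_letmap_beta[OF assms] .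
  then have "check \<Gamma> (Letmap t (subst (lift u' 1) 0 u)) = Some (Dia C)"
    unfolding eq_in_def using eqv_typing2 typing_iff by blast
  then show ?thesis using beta eq_in_reduce eq_in_trans by blast
qed

lemma st_natural_Syn:
  assumes a: "typing [X] a X'" and c: "typing [Y] c Y'"
  shows "comp Syn (st Syn (obj X') (obj Y')) (prodmap Syn (arr X X' a) (DA Syn (arr Y Y' c)))
       = comp Syn (DA Syn (prodmap Syn (arr X X' a) (arr Y Y' c))) (st Syn (obj X) (obj Y))"
proof -
  note fa = arr_term_facts[OF a] and fc = arr_term_facts[OF c]
  let ?G = "[Prod X (Dia Y)]" and ?T = "Dia (Prod X' Y')"
  let ?F0 = "subst a 0 (Fst (Var 0))" and ?F1 = "subst a 0 (Fst (Var 1))"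
  let ?Lc0 = "Letmap (Snd (Var 0)) c" and ?Lc1 = "Letmap (Snd (Var 1)) c"
  let ?LT = "Letmap (Snd (Pair ?F0 ?Lc0)) (Pair (Fst (Pair ?F1 ?Lc1)) (Var 0))"
  let ?P = "Pair (Fst (Var 1)) (Var 0)"
  let ?RT = "Letmap (Letmap (Snd (Var 0)) ?P) (Pair ?F0 (subst c 0 (Snd (Var 0))))"
  let ?N = "Letmap (Snd (Var 0)) (Pair ?F1 c)"
  have L: "comp Syn (st Syn (obj X') (obj Y')) (prodmap Syn (arr X X' a) (DA Syn (arr Y Y' c)))
      = arr (Prod X (Dia Y)) ?T ?LT"
    and R: "comp Syn (DA Syn (prodmap Syn (arr X X' a) (arr Y Y' c))) (st Syn (obj X) (obj Y))
      = arr (Prod X (Dia Y)) ?T ?RT"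
    using fa fc a c by (simp_all add: typing_iff prodmap_def)
  have "eq_in ?G ?T ?LT (Letmap ?Lc0 (Pair ?F1 (Var 0)))"
    by (rule eq_in_letmap[where A=Y', OF eq_in_snd_beta eq_in_pair[OF eq_in_fst_beta eq_in_refl]])
      (use fa fc in simp_all)
  also have "eq_in ?G ?T \<dots> (Letmap (Snd (Var 0)) (subst (lift (Pair ?F1 (Var 0)) 1) 0 c))"
    by (rule eq_in_letmap_beta[where A=Y and B=Y']) (use fa fc in simp_all)
  also have "\<dots> = ?N" using fa fc by simp
  finally have l: "eq_in ?G ?T ?LT ?N" .
  have "eq_in ?G ?T ?RT (Letmap (Snd (Var 0)) (subst (lift (Pair ?F0 (subst c 0 (Snd (Var 0)))) 1) 0 ?P))"
    by (rule eq_in_letmap_beta[where A=Y and B="Prod X Y"]) (use fa fc in simp_all)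
  also have "\<dots> = Letmap (Snd (Var 0)) (Pair (subst a 0 (Fst ?P)) (subst c 0 (Snd ?P)))"
    using fa fc by simp
  also have "eq_in ?G ?T \<dots> (Letmap (Snd (Var 0)) (Pair ?F1 (subst c 0 (Var 0))))"
    by (rule eq_in_letmap[where A=Y, OF eq_in_refl
          eq_in_pair[OF eq_in_subst_arg[where B=X] eq_in_subst_arg[where B=Y]]],
        (use fa fc in simp_all), (rule eq_in_fst_beta; simp), (rule eq_in_snd_beta; simp))
  also have "\<dots> = ?N" using fc by simp
  finally have r: "eq_in ?G ?T ?RT ?N" .
  show ?thesis using L R arr_eq_in[OF eq_in_meet[OF l r refl]] by simp
qed

lemma st_unit_Syn: "comp Syn (DA Syn (pr2 Syn (trm Syn) (obj A))) (st Syn (trm Syn) (obj A))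
    = pr2 Syn (trm Syn) (DO Syn (obj A))"
proof -
  let ?st = "Letmap (Snd (Var 0)) (Pair (Fst (Var 1)) (Var 0))"
  have "eq_in [Prod One (Dia A)] (Dia A) (Letmap ?st (Snd (Var 0))) (Snd (Var 0))"
    by (rule eq_in_meet[OF eq_in_letmap_beta_reduce[where A=A and B="Prod One A"]
          eq_in_letmap_eta[where A=A]]) simp_all
  then show ?thesis by (simp add: typing_iff arr_eq_in)
qed

lemma st_assoc_Syn:
  "comp Syn (DA Syn (assoc Syn (obj A) (obj B) (obj D))) (st Syn (prd Syn (obj A) (obj B)) (obj D))
   = comp Syn (st Syn (obj A) (prd Syn (obj B) (obj D)))
       (comp Syn (prodmap Syn (idm Syn (obj A)) (st Syn (obj B) (obj D)))
          (assoc Syn (obj A) (obj B) (DO Syn (obj D))))"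
proof -
  let ?l = "Letmap (Letmap (Snd (Var 0)) (Pair (Fst (Var 1)) (Var 0)))
    (Pair (Fst (Fst (Var 0))) (Pair (Snd (Fst (Var 0))) (Snd (Var 0))))"
  let ?r = "Letmap (Letmap (Snd (Var 0)) (Pair (Snd (Fst (Var 1))) (Var 0)))
    (Pair (Fst (Fst (Var 1))) (Var 0))"
  have lr: "eq_in [Prod (Prod A B) (Dia D)] (Dia (Prod A (Prod B D))) ?l ?r"
    by (rule eq_in_meet[OF eq_in_letmap_beta_reduce[where A=D and B="Prod (Prod A B) D"]
          eq_in_letmap_beta_reduce[where A=D and B="Prod B D"]]) simp_all
  show ?thesis
    by (simp add: typing_iff prodmap_def assoc_def, rule arr_eq_by_reduce)
      (use lr in \<open>simp_all add: typing_iff\<close>)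
qed

lemma is_strength_Syn: "is_strength Syn"
  unfolding is_strength_def
proof (intro conjI ballI)
  fix f g assume "f \<in> Ar Syn" "g \<in> Ar Syn"
  then obtain X X' a Y Y' c where "typing [X] a X'" "f = arr X X' a" "typing [Y] c Y'" "g = arr Y Y' c"
    by (metis Ar_SynE)
  then show "comp Syn (st Syn (cod Syn f) (cod Syn g)) (prodmap Syn f (DA Syn g))
      = comp Syn (DA Syn (prodmap Syn f g)) (st Syn (dom Syn f) (dom Syn g))"
    using st_natural_Syn by simp
qed (use st_unit_Syn st_assoc_Syn in \<open>auto simp: typing_iff\<close>)

lemma is_model_Syn: "is_model Syn (obj Base)"
  unfolding is_model_def
  using is_category_Syn is_terminal_Syn has_products_Syn has_exponentials_Syn is_endofunctor_Syn
    is_strength_Syn by simp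

primrec ctx_ty :: "ty list \<Rightarrow> ty" where
  "ctx_ty [] = One"
| "ctx_ty (A # \<Gamma>) = Prod (ctx_ty \<Gamma>) A"

primrec ctx_tuple :: "ty list \<Rightarrow> tm" where
  "ctx_tuple [] = Unit"
| "ctx_tuple (A # \<Gamma>) = Pair (lift (ctx_tuple \<Gamma>) 0) (Var 0)"

lemma typing_ctx_tuple: "typing \<Gamma> (ctx_tuple \<Gamma>) (ctx_ty \<Gamma>)"
  by (induction \<Gamma>) (auto intro: typing.intros typing_lift0)

lemma ity_Syn [simp]: "ity Syn (obj Base) A = obj A"
  by (induction A) simp_all

lemma ictx_Syn [simp]: "ictx Syn (obj Base) \<Gamma> = obj (ctx_ty \<Gamma>)"
  by (induction \<Gamma>) simp_all

definition represents :: "ty list \<Rightarrow> ty \<Rightarrow> nat \<Rightarrow> tm \<Rightarrow> bool" where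
  "represents \<Gamma> A m t \<longleftrightarrow> (\<exists>t'. typing [ctx_ty \<Gamma>] t' A \<and> m = arr (ctx_ty \<Gamma>) A t'
     \<and> eqv \<Gamma> (subst t' 0 (ctx_tuple \<Gamma>)) t A)"

lemma represents_ivar: "i < length \<Gamma> \<Longrightarrow> represents \<Gamma> (\<Gamma> ! i) (ivar Syn (obj Base) \<Gamma> i) (Var i)"
proof (induction \<Gamma> arbitrary: i)
  case (Cons A \<Gamma>)
  have tl: "typing (A # \<Gamma>) (lift (ctx_tuple \<Gamma>) 0) (ctx_ty \<Gamma>)" using typing_lift0[OF typing_ctx_tuple] .
  show ?case
  proof (cases i)
    case 0
    have "eqv (A # \<Gamma>) (Snd (Pair (lift (ctx_tuple \<Gamma>) 0) (Var 0))) (Var 0) A"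
      by (rule eqv.snd_beta[OF tl]) (simp add: typing_iff)
    then show ?thesis using 0 unfolding represents_def
      by (intro exI[of _ "Snd (Var 0)"]) (simp add: typing_iff)
  next
    case (Suc j)
    then obtain p where p: "typing [ctx_ty \<Gamma>] p (\<Gamma> ! j)"
      "ivar Syn (obj Base) \<Gamma> j = arr (ctx_ty \<Gamma>) (\<Gamma> ! j) p"
      "eqv \<Gamma> (subst p 0 (ctx_tuple \<Gamma>)) (Var j) (\<Gamma> ! j)"
      using Cons unfolding represents_def by auto
    note fp = arr_term_facts[OF p(1)]
    let ?q = "subst p 0 (Fst (Var 0))"
    have "eq_in (A # \<Gamma>) (\<Gamma> ! j) (subst ?q 0 (ctx_tuple (A # \<Gamma>))) (subst p 0 (lift (ctx_tuple \<Gamma>) 0))"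
      using fp by simp
        (rule eq_in_subst_arg[where B="ctx_ty \<Gamma>"], use fp tl in \<open>simp_all add: typing_iff eq_in_fst_beta\<close>)
    also have "subst p 0 (lift (ctx_tuple \<Gamma>) 0) = lift (subst p 0 (ctx_tuple \<Gamma>)) 0" using fp by simp
    also have "eq_in (A # \<Gamma>) (\<Gamma> ! j) (lift (subst p 0 (ctx_tuple \<Gamma>)) 0) (lift (Var j) 0)"
      using eqv_lift0[OF p(3)] unfolding eq_in_def .
    finally show ?thesis using Suc p fp unfolding represents_def eq_in_def
      by (intro exI[of _ ?q]) (simp add: typing_iff)
  qed
qed simp

lemma ev_tup_Syn:
  assumes "typing [X] t (Arr A B)" "typing [X] u A"
  shows "comp Syn (ev Syn (obj A) (obj B)) (tup Syn (arr X (Arr A B) t) (arr X A u))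
    = arr X B (App t u)"
proof -
  note ft = arr_term_facts[OF assms(1)] and fu = arr_term_facts[OF assms(2)]
  have "eq_in [X] B (App (Fst (Pair t u)) (Snd (Pair t u))) (App t u)"
    by (rule eq_in_app[OF eq_in_fst_beta eq_in_snd_beta]) (use ft fu in simp_all)
  then show ?thesis using assms ft fu by (simp add: typing_iff arr_eq_in)
qed

lemma letmap_arr_Syn:
  assumes t: "typing [X] t (Dia A)" and u: "typing [Prod X A] u B"
  shows "comp Syn (DA Syn (arr (Prod X A) B u))
      (comp Syn (st Syn (obj X) (obj A)) (tup Syn (idm Syn (obj X)) (arr X (Dia A) t)))
    = arr X (Dia B) (Letmap t (subst u 0 (Pair (Var 1) (Var 0))))"
proof -
  note ft = arr_term_facts[OF t] and fu = arr_term_facts[OF u]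
  have ft': "\<forall>B \<Delta>. check (B # X # \<Delta>) (lift t 0) = Some (Dia A)"
    using typing_lift0[OF typing_append[OF t]] by (simp add: typing_iff)
  let ?S = "Letmap (Letmap (Snd (Pair (Var 0) t)) (Pair (Fst (Pair (Var 1) (lift t 0))) (Var 0))) u"
  have "eq_in [X] (Dia B) ?S (Letmap (Letmap t (Pair (Var 1) (Var 0))) u)"
    by (rule eq_in_letmap[where A="Prod X A", OF eq_in_letmap[where A=A,
          OF eq_in_snd_beta eq_in_pair[OF eq_in_fst_beta eq_in_refl]] eq_in_refl])
      (use ft fu ft' in simp_all)
  also have "eq_in [X] (Dia B) \<dots> (Letmap t (subst (lift u 1) 0 (Pair (Var 1) (Var 0))))"
    by (rule eq_in_letmap_beta[where A=A and B="Prod X A"]) (use ft fu in simp_all)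
  also have "subst (lift u 1) 0 (Pair (Var 1) (Var 0)) = subst u 0 (Pair (Var 1) (Var 0))"
    using fu by simp
  finally have "arr X (Dia B) ?S = arr X (Dia B) (Letmap t (subst u 0 (Pair (Var 1) (Var 0))))"
    by (rule arr_eq_in)
  then show ?thesis using t u ft fu ft' by (simp add: typing_iff)
qed

lemma represents_sem: "typing \<Gamma> t A \<Longrightarrow> represents \<Gamma> A (sem Syn (obj Base) \<Gamma> t) t"
proof (induction rule: typing.induct)
  case (T_Var i \<Gamma>)
  then show ?case by (simp add: represents_ivar)
next
  case (T_Unit \<Gamma>)
  then show ?case unfolding represents_def
    by (intro exI[of _ Unit]) (simp add: typing_iff eqv.E_refl typing.T_Unit)
next
  case (T_Pair \<Gamma> t A u B)
  then obtain t1 u1 where "typing [ctx_ty \<Gamma>] t1 A" "sem Syn (obj Base) \<Gamma> t = arr (ctx_ty \<Gamma>) A t1"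
    "eqv \<Gamma> (subst t1 0 (ctx_tuple \<Gamma>)) t A" and "typing [ctx_ty \<Gamma>] u1 B"
    "sem Syn (obj Base) \<Gamma> u = arr (ctx_ty \<Gamma>) B u1" "eqv \<Gamma> (subst u1 0 (ctx_tuple \<Gamma>)) u B"
    unfolding represents_def by auto
  then show ?case unfolding represents_def
    by (intro exI[of _ "Pair t1 u1"]) (simp add: typing.T_Pair eqv.C_Pair)
next
  case (T_Fst \<Gamma> t A B)
  then obtain t1 where "typing [ctx_ty \<Gamma>] t1 (Prod A B)"
    "sem Syn (obj Base) \<Gamma> t = arr (ctx_ty \<Gamma>) (Prod A B) t1"
    "eqv \<Gamma> (subst t1 0 (ctx_tuple \<Gamma>)) t (Prod A B)"
    unfolding represents_def by auto
  then show ?case unfolding represents_def using tyof_typing[OF T_Fst(1)]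
    by (intro exI[of _ "Fst t1"]) (auto simp: typing_iff intro: eqv.C_Fst)
next
  case (T_Snd \<Gamma> t A B)
  then obtain t1 where "typing [ctx_ty \<Gamma>] t1 (Prod A B)"
    "sem Syn (obj Base) \<Gamma> t = arr (ctx_ty \<Gamma>) (Prod A B) t1"
    "eqv \<Gamma> (subst t1 0 (ctx_tuple \<Gamma>)) t (Prod A B)"
    unfolding represents_def by auto
  then show ?case unfolding represents_def using tyof_typing[OF T_Snd(1)]
    by (intro exI[of _ "Snd t1"]) (auto simp: typing_iff intro: eqv.C_Snd)
next
  case (T_App \<Gamma> t A B u)
  then obtain t1 u1 where t1: "typing [ctx_ty \<Gamma>] t1 (Arr A B)"
    "sem Syn (obj Base) \<Gamma> t = arr (ctx_ty \<Gamma>) (Arr A B) t1"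
    "eqv \<Gamma> (subst t1 0 (ctx_tuple \<Gamma>)) t (Arr A B)" and u1: "typing [ctx_ty \<Gamma>] u1 A"
    "sem Syn (obj Base) \<Gamma> u = arr (ctx_ty \<Gamma>) A u1" "eqv \<Gamma> (subst u1 0 (ctx_tuple \<Gamma>)) u A"
    unfolding represents_def by auto
  then show ?case unfolding represents_def
    using tyof_typing[OF T_App(1)] ev_tup_Syn[OF t1(1) u1(1)]
    by (intro exI[of _ "App t1 u1"]) (auto intro: typing.T_App eqv.C_App)
next
  case (T_Lam A \<Gamma> t B)
  then obtain t1 where t1: "typing [Prod (ctx_ty \<Gamma>) A] t1 B"
    "sem Syn (obj Base) (A # \<Gamma>) t = arr (Prod (ctx_ty \<Gamma>) A) B t1"
    "eqv (A # \<Gamma>) (subst t1 0 (Pair (lift (ctx_tuple \<Gamma>) 0) (Var 0))) t B"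
    unfolding represents_def by auto
  note f1 = arr_term_facts[OF t1(1)]
  show ?case unfolding represents_def
    using t1 f1 eqv.C_Lam[OF t1(3)] tyof_typing[OF T_Lam(1)]
    by (intro exI[of _ "Lam A (subst t1 0 (Pair (Var 1) (Var 0)))"]) (simp add: typing_iff)
next
  case (T_Letmap \<Gamma> t A u B)
  then obtain t1 u1 where t1: "typing [ctx_ty \<Gamma>] t1 (Dia A)"
    "sem Syn (obj Base) \<Gamma> t = arr (ctx_ty \<Gamma>) (Dia A) t1"
    "eqv \<Gamma> (subst t1 0 (ctx_tuple \<Gamma>)) t (Dia A)"
    and u1: "typing [Prod (ctx_ty \<Gamma>) A] u1 B"
    "sem Syn (obj Base) (A # \<Gamma>) u = arr (Prod (ctx_ty \<Gamma>) A) B u1"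
    "eqv (A # \<Gamma>) (subst u1 0 (Pair (lift (ctx_tuple \<Gamma>) 0) (Var 0))) u B"
    unfolding represents_def by auto
  note f1 = arr_term_facts[OF t1(1)] and g1 = arr_term_facts[OF u1(1)]
  show ?case unfolding represents_def
    using t1 u1 f1 g1 eqv.C_Letmap[OF t1(3) u1(3)] letmap_arr_Syn[OF t1(1) u1(1)]
      tyof_typing[OF T_Letmap(1)]
    by (intro exI[of _ "Letmap t1 (subst u1 0 (Pair (Var 1) (Var 0)))"]) (simp add: typing_iff)
qed

lemma represents_unique:
  assumes "represents \<Gamma> A m t" and "represents \<Gamma> A m u"
  shows "eqv \<Gamma> t u A"
proof -
  obtain t' u' where t': "typing [ctx_ty \<Gamma>] t' A" "eqv \<Gamma> (subst t' 0 (ctx_tuple \<Gamma>)) t A"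
    and u': "typing [ctx_ty \<Gamma>] u' A" "eqv \<Gamma> (subst u' 0 (ctx_tuple \<Gamma>)) u A"
    and "arr (ctx_ty \<Gamma>) A t' = arr (ctx_ty \<Gamma>) A u'"
    using assms unfolding represents_def by auto
  then have "eqv (ctx_ty \<Gamma> # \<Gamma>) t' u' A" using arr_eq_iff eqv_append[of "[ctx_ty \<Gamma>]"] by auto
  then have "eqv \<Gamma> (subst t' 0 (ctx_tuple \<Gamma>)) (subst u' 0 (ctx_tuple \<Gamma>)) A"
    using eqv_subst0 eqv.E_refl[OF typing_ctx_tuple] by blast
  then show ?thesis using t'(2) u'(2) by (meson eqv.E_sym eqv.E_trans)
qed

lemma completeness:
  assumes "typing \<Gamma> t A" and "typing \<Gamma> u A"
    and "sem Syn (obj Base) \<Gamma> t = sem Syn (obj Base) \<Gamma> u"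
  shows "eqv \<Gamma> t u A"
  using represents_unique represents_sem assms by metis

theorem proposition3p1:
  assumes "typing \<Gamma> t A" and "typing \<Gamma> u A"
  shows "(eqv \<Gamma> t u A \<longleftrightarrow>
           (\<forall>(C :: (nat, nat) sccc) b. is_model C b \<longrightarrow> sem C b \<Gamma> t = sem C b \<Gamma> u))
       \<and> (eqv \<Gamma> t u A \<longrightarrow>
           (\<forall>(C :: ('o, 'm) sccc) b. is_model C b \<longrightarrow> sem C b \<Gamma> t = sem C b \<Gamma> u))"
proof -
  have "eqv \<Gamma> t u A \<longrightarrow> (\<forall>(C :: (nat, nat) sccc) b. is_model C b \<longrightarrow> sem C b \<Gamma> t = sem C b \<Gamma> u)"
    by (blast intro: soundness)
  moreover have "eqv \<Gamma> t u A \<longrightarrow> (\<forall>(C :: ('o, 'm) sccc) b. is_model C b \<longrightarrow> sem C b \<Gamma> t = sem C b \<Gamma> u)"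
    by (blast intro: soundness)
  moreover have "(\<forall>(C :: (nat, nat) sccc) b. is_model C b \<longrightarrow> sem C b \<Gamma> t = sem C b \<Gamma> u) \<longrightarrow> eqv \<Gamma> t u A"
    using completeness[OF assms] is_model_Syn by blast
  ultimately show ?thesis by blast
qed

end
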